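(* Consider any sequences $\{(x_k,y_k,\gamma_k)\}_{k\ge0}$, $\{(\tilde x_k,u_k,\tilde\gamma_k)\}_{k\ge1}$ generated by the inexact symmetric proximal ADMM described in the context, and define for $i\ge1$ $$v_i=\Big(H+\tfrac{(\tau-\tau\theta+\theta)\beta}{\tau+\theta}B^*B\Big)(y_{i-1}-y_i)-\tfrac{\tau}{\tau+\theta}B^*(\gamma_{i-1}-\gamma_i),\qquad w_i=-\tfrac{\tau}{\tau+\theta}B(y_{i-1}-y_i)+\tfrac{1}{(\tau+\theta)\beta}(\gamma_{i-1}-\gamma_i).$$ For $k\ge1$ define the ergodic quantities $(x^a_k,y^a_k,\gamma^a_k,\tilde x^a_k,\tilde\gamma^a_k)=\frac1k\sum_{i=1}^k(x_i,y_i,\gamma_i,\tilde x_i,\tilde\gamma_i)$, $(u^a_k,v^a_k,w^a_k)=\frac1k\sum_{i=1}^k(u_i,v_i,w_i)$, $$\varepsilon^a_k=\frac1k\sum_{i=1}^k\langle u_i+A^*\tilde\gamma_i,\tilde x_i-\tilde x^a_k\rangle,\qquad \zeta^a_k=\frac1k\sum_{i=1}^k\langle v_i+B^*\tilde\gamma_i,y_i-y^a_k\rangle.$$ Let $\sigma\in[\hat\sigma,1)$ be a scalar with $\varphi(\sigma)\ge0$, $\widehat\varphi(\sigma)\ge0$, $\widetilde\varphi(\sigma)>0$, $\overline\varphi(\sigma)\ge0$ (such $\sigma$ exists). Then for every $k\ge1$: $\varepsilon^a_k\ge0$, $\zeta^a_k\ge0$, $$u^a_k\in\partial_{\varepsilon^a_k}f(\tilde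 x^a_k)-A^*\tilde\gamma^a_k,\qquad v^a_k\in\partial_{\zeta^a_k}g(y^a_k)-B^*\tilde\gamma^a_k,\qquad w^a_k=A\tilde x^a_k+By^a_k-b,$$ and $$\max\{\|u^a_k\|,\|v^a_k\|,\|w^a_k\|\}\le\frac{2\sqrt{\lambda_Md_0\mathcal C_2}}{k},\qquad \max\{\varepsilon^a_k,\zeta^a_k\}\le\frac{3d_0\mathcal C_3}{2k},$$ where $\mathcal C_2=1+\frac{4(1+\tau+\vartheta)\varphi(\sigma)}{(\tau+\theta)(1+\tau)\vartheta}$, $\mathcal C_3=(3-2\sigma)\mathcal C_2/(1-\sigma)$, and $\lambda_M$ is the largest eigenvalue of $M$.
   Context: Let $f:\mathbb{R}^n\to(-\infty,\infty]$ and $g:\mathbb{R}^p\to(-\infty,\infty]$ be proper closed convex functions, $A\in\mathbb{R}^{m\times n}$, $B\in\mathbb{R}^{m\times p}$, $b\in\mathbb{R}^m$ (problem: $\min\{f(x)+g(y):Ax+By=b\}$). Standing assumption: there exists $(x^*,y^*,\gamma^* )$ solving the Lagrangian system $0\in\partial f(x)-A^*\gamma$, $0\in\partial g(y)-B^*\gamma$, $0=Ax+By-b$. Here $\partial$ is the subdifferential, and for $\varepsilon\ge0$ the $\varepsilon$-subdifferential is $\partial_\varepsilon h(x)=\{u: h(\tilde x)\ge h(x)+\langle u,\tilde x-x\rangle-\varepsilon\ \forall\tilde x\}$; $A^*$ is the transpose, $\mathbb{S}^n_{++}$ ($\mathbb{S}^p_+$) the symmetric positive definite (semidefinite) matrices,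 and $\|z\|_Q=\sqrt{\langle Qz,z\rangle}$ for $Q$ positive semidefinite. Algorithm (inexact symmetric proximal ADMM): given $(x_0,y_0,\gamma_0)\in\mathbb{R}^n\times\mathbb{R}^p\times\mathbb{R}^m$, $\beta>0$, $\tilde\sigma,\hat\sigma\in[0,1)$, $G\in\mathbb{S}^n_{++}$, $H\in\mathbb{S}^p_+$, and $(\tau,\theta)\in\mathcal R_{\tilde\sigma}:=\{(\tau,\theta):\tau\in(-1,1-\tilde\sigma),\ \tau+\theta>0,\ (1-\tau^2)(2-\tau-\theta-\tilde\sigma)-(1-\theta)^2(1-\tau-\tilde\sigma)>0\}$. For $k=1,2,\dots$: compute $(\tilde x_k,u_k)$ with $u_k\in\partial f(\tilde x_k)-A^*\tilde\gamma_k$ and $\|\tilde x_k-x_{k-1}+G^{-1}u_k\|_G^2\le\frac{\tilde\sigma}{\beta}\|\tilde\gamma_k-\gamma_{k-1}\|^2+\hat\sigma\|\tilde x_k-x_{k-1}\|_G^2$, where $\tilde\gamma_k=\gamma_{k-1}-\beta(A\tilde x_k+By_{k-1}-b)$; set $\gamma_{k-1/2}=\gamma_{k-1}-\tau\beta(A\tilde x_k+By_{k-1}-b)$; let $y_k$ be an optimal solution of $\min_y\{g(y)-\langle\gamma_{k-1/2},By\rangle+\frac\beta2\|A\tilde x_k+By-b\|^2+\frac12\|y-y_{k-1}\|_H^2\}$; set $x_k=x_{k-1}-G^{-1}u_k$ and $\gamma_k=\gamma_{k-1/2}-\theta\beta(A\tilde x_k+By_k-b)$. Definitions: $T(x,y,\gamma)=(\partial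 f(x)-A^*\gamma,\ \partial g(y)-B^*\gamma,\ Ax+By-b)$; $M=\begin{bmatrix}G&0&0\\0&H+\frac{(\tau-\tau\theta+\theta)\beta}{\tau+\theta}B^*B&-\frac{\tau}{\tau+\theta}B^*\\0&-\frac{\tau}{\tau+\theta}B&\frac{1}{(\tau+\theta)\beta}I\end{bmatrix}$; $z_0=(x_0,y_0,\gamma_0)$; $d_0=\inf\{\|z^*-z_0\|_M^2: z^*\in T^{-1}(0)\}$; $\vartheta=\sqrt{(3-3\tau-2\tilde\sigma)(4-\tau-\theta-2\tilde\sigma)}-2(1-\tau-\tilde\sigma)$; and for $\sigma\in\mathbb{R}$: $\varphi(\sigma)=(1-\tau)(\sigma-1)+(1-\tau-\tilde\sigma)(\tau+\theta)$, $\widehat\varphi(\sigma)=(1-\tau)[(1+\theta)\sigma-1+\tau]-\tilde\sigma(\tau+\theta)$, $\widetilde\varphi(\sigma)=\sigma-(1-\tau-\theta)^2-\tilde\sigma(\tau+\theta)$, $\overline\varphi(\sigma)=[(1+\tau)\widehat\varphi(\sigma)-2\tau\varphi(\sigma)](1+\tau)\widetilde\varphi(\sigma)-(1-\theta)^2\varphi(\sigma)^2$. *)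

theory Defs
  imports "HOL-Analysis.Analysis"
begin

text \<open>Extended-real valued functions f : R^n -> (-inf, +inf] are modelled as
  functions into ereal that never take the value -infinity.\<close>

definition proper_fun :: "('a \<Rightarrow> ereal) \<Rightarrow> bool" where
  "proper_fun h \<longleftrightarrow> (\<forall>x. h x \<noteq> -\<infinity>) \<and> (\<exists>x. h x \<noteq> \<infinity>)"

definition convex_fun :: "('a::real_vector \<Rightarrow> ereal) \<Rightarrow> bool" where
  "convex_fun h \<longleftrightarrow> (\<forall>x y t. 0 < t \<and> t < 1 \<longrightarrow>
      h ((1 - t) *\<^sub>R x + t *\<^sub>R y) \<le> ereal (1 - t) * h x + ereal t * h y)"

definition closed_fun :: "('a::topological_space \<Rightarrow> ereal) \<Rightarrow> bool" where
  "closed_fun h \<longleftrightarrow> closed {(x, t::real). h x \<le> ereal t}"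

definition proper_closed_convex :: "('a::real_normed_vector \<Rightarrow> ereal) \<Rightarrow> bool" where
  "proper_closed_convex h \<longleftrightarrow> proper_fun h \<and> closed_fun h \<and> convex_fun h"

definition eps_subdiff :: "('a::real_inner \<Rightarrow> ereal) \<Rightarrow> real \<Rightarrow> 'a \<Rightarrow> 'a set" where
  "eps_subdiff h \<epsilon> x = {u. \<forall>z. h z \<ge> h x + ereal (inner u (z - x) - \<epsilon>)}"

definition subdiff :: "('a::real_inner \<Rightarrow> ereal) \<Rightarrow> 'a \<Rightarrow> 'a set" where
  "subdiff h x = eps_subdiff h 0 x"

definition qnorm2 :: "real^'n^'n \<Rightarrow> real^'n \<Rightarrow> real" where
  "qnorm2 Q z = inner (Q *v z) z"

definition sym_pd :: "real^'n^'n \<Rightarrow> bool" where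
  "sym_pd Q \<longleftrightarrow> transpose Q = Q \<and> (\<forall>z. z \<noteq> 0 \<longrightarrow> inner (Q *v z) z > 0)"

definition sym_psd :: "real^'n^'n \<Rightarrow> bool" where
  "sym_psd Q \<longleftrightarrow> transpose Q = Q \<and> (\<forall>z. inner (Q *v z) z \<ge> 0)"

definition lambda_max :: "real^'n^'n \<Rightarrow> real" where
  "lambda_max Q = Max {l. \<exists>v. v \<noteq> 0 \<and> Q *v v = l *\<^sub>R v}"

text \<open>Vectors on the product space R^n x R^p x R^m, indexed by 'n + 'p + 'm\<close>
definition blk3 :: "real^'n \<Rightarrow> real^'p \<Rightarrow> real^'m \<Rightarrow> real^('n + 'p + 'm)" where
  "blk3 x y g = (\<chi> i. case i of Inl a \<Rightarrow> x $ a | Inr (Inl b) \<Rightarrow> y $ b | Inr (Inr c) \<Rightarrow> g $ c)"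

definition blkmat3 ::
  "real^'n^'n \<Rightarrow> real^'p^'n \<Rightarrow> real^'m^'n \<Rightarrow>
   real^'n^'p \<Rightarrow> real^'p^'p \<Rightarrow> real^'m^'p \<Rightarrow>
   real^'n^'m \<Rightarrow> real^'p^'m \<Rightarrow> real^'m^'m \<Rightarrow> real^('n + 'p + 'm)^('n + 'p + 'm)" where
  "blkmat3 M11 M12 M13 M21 M22 M23 M31 M32 M33 = (\<chi> i j.
     case i of
       Inl a \<Rightarrow> (case j of Inl a' \<Rightarrow> M11 $ a $ a' | Inr (Inl b') \<Rightarrow> M12 $ a $ b' | Inr (Inr c') \<Rightarrow> M13 $ a $ c')
     | Inr (Inl b) \<Rightarrow> (case j of Inl a' \<Rightarrow> M21 $ b $ a' | Inr (Inl b') \<Rightarrow> M22 $ b $ b' | Inr (Inr c') \<Rightarrow> M23 $ b $ c')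
     | Inr (Inr c) \<Rightarrow> (case j of Inl a' \<Rightarrow> M31 $ c $ a' | Inr (Inl b') \<Rightarrow> M32 $ c $ b' | Inr (Inr c') \<Rightarrow> M33 $ c $ c'))"

definition Mmat :: "real^'n^'n \<Rightarrow> real^'p^'p \<Rightarrow> real^'p^'m \<Rightarrow> real \<Rightarrow> real \<Rightarrow> real
                    \<Rightarrow> real^('n + 'p + 'm)^('n + 'p + 'm)" where
  "Mmat G H B \<beta> \<tau> \<theta> = blkmat3
     G 0 0
     0 (H + (((\<tau> - \<tau> * \<theta> + \<theta>) * \<beta>) / (\<tau> + \<theta>)) *\<^sub>R (transpose B ** B)) ((- \<tau> / (\<tau> + \<theta>)) *\<^sub>R transpose B)
     0 ((- \<tau> / (\<tau> + \<theta>)) *\<^sub>R B) ((1 / ((\<tau> + \<theta>) * \<beta>)) *\<^sub>R mat 1)"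

definition region_R :: "real \<Rightarrow> (real \<times> real) set" where
  "region_R st = {(\<tau>, \<theta>). -1 < \<tau> \<and> \<tau> < 1 - st \<and> \<tau> + \<theta> > 0 \<and>
      (1 - \<tau>^2) * (2 - \<tau> - \<theta> - st) - (1 - \<theta>)^2 * (1 - \<tau> - st) > 0}"

definition vartheta :: "real \<Rightarrow> real \<Rightarrow> real \<Rightarrow> real" where
  "vartheta st \<tau> \<theta> = sqrt ((3 - 3 * \<tau> - 2 * st) * (4 - \<tau> - \<theta> - 2 * st)) - 2 * (1 - \<tau> - st)"

definition phi :: "real \<Rightarrow> real \<Rightarrow> real \<Rightarrow> real \<Rightarrow> real" where
  "phi st \<tau> \<theta> \<sigma> = (1 - \<tau>) * (\<sigma> - 1) + (1 - \<tau> - st) * (\<tau> + \<theta>)"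

definition phi_hat :: "real \<Rightarrow> real \<Rightarrow> real \<Rightarrow> real \<Rightarrow> real" where
  "phi_hat st \<tau> \<theta> \<sigma> = (1 - \<tau>) * ((1 + \<theta>) * \<sigma> - 1 + \<tau>) - st * (\<tau> + \<theta>)"

definition phi_tilde :: "real \<Rightarrow> real \<Rightarrow> real \<Rightarrow> real \<Rightarrow> real" where
  "phi_tilde st \<tau> \<theta> \<sigma> = \<sigma> - (1 - \<tau> - \<theta>)^2 - st * (\<tau> + \<theta>)"

definition phi_bar :: "real \<Rightarrow> real \<Rightarrow> real \<Rightarrow> real \<Rightarrow> real" where
  "phi_bar st \<tau> \<theta> \<sigma> =
     ((1 + \<tau>) * phi_hat st \<tau> \<theta> \<sigma> - 2 * \<tau> * phi st \<tau> \<theta> \<sigma>) * (1 + \<tau>) * phi_tilde st \<tau> \<theta> \<sigma>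
     - (1 - \<theta>)^2 * (phi st \<tau> \<theta> \<sigma>)^2"

definition avg :: "nat \<Rightarrow> (nat \<Rightarrow> 'a::real_vector) \<Rightarrow> 'a" where
  "avg k s = (1 / real k) *\<^sub>R (\<Sum>i = 1..k. s i)"

end

theory Submission
  imports Defs
begin

text \<open>With \<open>z_i = (x_i, y_i, \<gamma>_i)\<close> and \<open>z\<^sup>~_i = (x\<^sup>~_i, y_i, \<gamma>\<^sup>~_i)\<close>, one step of the method satisfies
  \<open>M (z_{i-1} - z_i) = (u_i, v_i, w_i)\<close>, and this residual is a subgradient-type element of the KKT
  operator at \<open>z\<^sup>~_i\<close>; so the scheme is an inexact hybrid proximal extragradient (HPE) method in the
  seminorm of \<open>M\<close>. Its relative error obeys
  \<open>\<parallel>z\<^sup>~_i - z_i\<parallel>\<^sup>2_M \<le> \<sigma> \<parallel>z\<^sup>~_i - z_{i-1}\<parallel>\<^sup>2_M + \<eta>_{i-1} - \<eta>_i\<close> for a nonnegative potential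
  \<open>\<eta>\<close> built from \<open>\<parallel>Ax\<^sup>~_i + By_i - b\<parallel>\<^sup>2\<close> and \<open>\<parallel>y_i - y_{i-1}\<parallel>\<^sup>2_H\<close>; at \<open>i = 1\<close>, where no
  predecessor exists, the distance to a solution pays for \<open>\<eta>_0 \<le> (C\<^sub>2 - 1) d\<^sub>0\<close>. Monotonicity
  then makes \<open>\<parallel>z\<^sup>* - z_i\<parallel>\<^sup>2_M + \<eta>_i\<close> nonincreasing, the averaged residual telescopes to
  \<open>M (z_0 - z_k) / k\<close>, and the \<open>\<epsilon>\<close>-subdifferential inclusions for the averages are the
  transportation formula for subgradients.\<close>

declare transpose_matrix_vector[simp del]

section \<open>Matrices and block vectors\<close>

lemma inner_matrix_vector_transpose:
  "inner (A *v x) y = inner x (transpose A *v y)" for A :: "real^'n^'m"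
  by (metis dot_lmul_matrix inner_commute transpose_matrix_vector)

lemma matrix_vector_mult_uminus_left: "(- A) *v x = - (A *v x)" for A :: "real^'n^'m"
  by (simp add: vec_eq_iff matrix_vector_mult_def sum_negf)

lemma matrix_vector_mult_uminus_right: "A *v (- x) = - (A *v x)" for A :: "real^'n^'m"
  by (simp add: vec_eq_iff matrix_vector_mult_def sum_negf)

lemma matrix_vector_mult_sum:
  "finite S \<Longrightarrow> A *v (\<Sum>i\<in>S. z i) = (\<Sum>i\<in>S. A *v z i)" for A :: "real^'n^'m"
  by (induction S rule: finite_induct) (simp_all add: matrix_vector_right_distrib)

lemma sym_pd_mult_matrix_inv:
  assumes "sym_pd G"
  shows "G *v (matrix_inv G *v u) = u"
proof -
  have "x = 0" if "G *v x = 0" for x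
    using assms that unfolding sym_pd_def by (metis inner_zero_left less_irrefl)
  hence "invertible G"
    using matrix_left_invertible_ker invertible_left_inverse by blast
  hence "G ** matrix_inv G = mat 1"
    unfolding invertible_def matrix_inv_def by (rule someI_ex[THEN conjunct1])
  thus ?thesis by (metis matrix_vector_mul_assoc matrix_vector_mul_lid)
qed

lemma sum_UNIV_Plus:
  "(\<Sum>i\<in>(UNIV :: ('a::finite + 'b::finite) set). f i) = (\<Sum>a\<in>UNIV. f (Inl a)) + (\<Sum>b\<in>UNIV. f (Inr b))"
  using sum.Plus[of "UNIV :: 'a set" "UNIV :: 'b set" f] by (simp add: comp_def)

lemma blk3_nth [simp]:
  "blk3 x y g $ Inl a = x $ a" "blk3 x y g $ Inr (Inl b) = y $ b" "blk3 x y g $ Inr (Inr c) = g $ c"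
  by (simp_all add: blk3_def)

lemma blk3_cases:
  obtains x y g where "z = blk3 x y g"
proof
  show "z = blk3 (\<chi> a. z $ Inl a) (\<chi> b. z $ Inr (Inl b)) (\<chi> c. z $ Inr (Inr c))"
    by (simp add: vec_eq_iff blk3_def split: sum.split)
qed

lemma inner_blk3: "inner (blk3 x y g) (blk3 x' y' g') = inner x x' + inner y y' + inner g g'"
  by (simp add: inner_vec_def sum_UNIV_Plus)

lemma blk3_add: "blk3 x y g + blk3 x' y' g' = blk3 (x + x') (y + y') (g + g')"
  and blk3_diff: "blk3 x y g - blk3 x' y' g' = blk3 (x - x') (y - y') (g - g')"
  and blk3_scaleR: "c *\<^sub>R blk3 x y g = blk3 (c *\<^sub>R x) (c *\<^sub>R y) (c *\<^sub>R g)"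
  and blk3_zero: "blk3 0 0 0 = 0"
  by (simp_all add: vec_eq_iff blk3_def split: sum.split)

lemma sum_blk3:
  "finite S \<Longrightarrow> (\<Sum>i\<in>S. blk3 (x i) (y i) (g i)) = blk3 (\<Sum>i\<in>S. x i) (\<Sum>i\<in>S. y i) (\<Sum>i\<in>S. g i)"
  by (induction S rule: finite_induct) (simp_all add: blk3_zero blk3_add)

lemma norm_le_norm_blk3:
  "norm x \<le> norm (blk3 x y g)" "norm y \<le> norm (blk3 x y g)" "norm g \<le> norm (blk3 x y g)"
proof -
  have sq: "(norm (blk3 x y g))\<^sup>2 = (norm x)\<^sup>2 + (norm y)\<^sup>2 + (norm g)\<^sup>2"
    by (simp add: power2_norm_eq_inner inner_blk3)
  have "(norm x)\<^sup>2 \<le> (norm (blk3 x y g))\<^sup>2" "(norm y)\<^sup>2 \<le> (norm (blk3 x y g))\<^sup>2"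
    "(norm g)\<^sup>2 \<le> (norm (blk3 x y g))\<^sup>2"
    unfolding sq by simp_all
  thus "norm x \<le> norm (blk3 x y g)" "norm y \<le> norm (blk3 x y g)" "norm g \<le> norm (blk3 x y g)"
    using power2_le_imp_le norm_ge_zero by blast+
qed

lemma blkmat3_mult_blk3:
  "blkmat3 M11 M12 M13 M21 M22 M23 M31 M32 M33 *v blk3 x y g =
   blk3 (M11 *v x + M12 *v y + M13 *v g) (M21 *v x + M22 *v y + M23 *v g) (M31 *v x + M32 *v y + M33 *v g)"
  by (simp add: vec_eq_iff blkmat3_def blk3_def matrix_vector_mult_def sum_UNIV_Plus split: sum.split)

lemma Mmat_mult_blk3:
  "Mmat G H B \<beta> \<tau> \<theta> *v blk3 x y g =
   blk3 (G *v x)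
        ((H + (((\<tau> - \<tau> * \<theta> + \<theta>) * \<beta>) / (\<tau> + \<theta>)) *\<^sub>R (transpose B ** B)) *v y
           - (\<tau> / (\<tau> + \<theta>)) *\<^sub>R (transpose B *v g))
        (- ((\<tau> / (\<tau> + \<theta>)) *\<^sub>R (B *v y)) + (1 / ((\<tau> + \<theta>) * \<beta>)) *\<^sub>R g)"
  unfolding Mmat_def blkmat3_mult_blk3
  by (simp add: scaleR_matrix_vector_assoc[symmetric] matrix_vector_mult_uminus_left)

lemma norm_scaleR_add_sq:
  fixes u w :: "'a::real_inner"
  shows "(norm (a *\<^sub>R u + c *\<^sub>R w))\<^sup>2 = a\<^sup>2 * (norm u)\<^sup>2 + 2 * a * c * inner u w + c\<^sup>2 * (norm w)\<^sup>2"
  unfolding power2_norm_eq_inner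
  by (simp add: inner_add_left inner_add_right inner_commute[of w u] power2_eq_square algebra_simps)

lemma inner_sq_le_norm_sq: "(inner a b)\<^sup>2 \<le> (norm a)\<^sup>2 * (norm (b :: 'a::real_inner))\<^sup>2"
  using Cauchy_Schwarz_ineq[of a b] by (simp add: power2_norm_eq_inner)

section \<open>Positive semidefinite matrices\<close>

lemma qnorm2_scaleR: "qnorm2 M (c *\<^sub>R a) = c\<^sup>2 * qnorm2 M a" for M :: "real^'k^'k"
  unfolding qnorm2_def by (simp add: matrix_vector_mult_scaleR power2_eq_square)

lemma qnorm2_minus_commute: "qnorm2 M (a - b) = qnorm2 M (b - a)" for M :: "real^'k^'k"
  using qnorm2_scaleR[of M "-1" "b - a"] by simp

lemma continuous_on_qnorm2: "continuous_on S (qnorm2 M)" for M :: "real^'k^'k"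
proof -
  have "continuous_on S (\<lambda>z. M *v z)"
    by (rule linear_continuous_on) (rule matrix_vector_mul_bounded_linear)
  thus ?thesis unfolding qnorm2_def by (intro continuous_intros)
qed

lemma symmetric_eigenvalues_finite:
  fixes M :: "real^'k^'k"
  assumes sym: "transpose M = M"
  shows "finite {l. \<exists>v. v \<noteq> 0 \<and> M *v v = l *\<^sub>R v}" (is "finite ?E")
proof -
  define ev where "ev l = (SOME v. v \<noteq> 0 \<and> M *v v = l *\<^sub>R v)" for l
  have ev: "ev l \<noteq> 0" "M *v ev l = l *\<^sub>R ev l" if "l \<in> ?E" for l
    using someI_ex[of "\<lambda>v. v \<noteq> 0 \<and> M *v v = l *\<^sub>R v"] that unfolding ev_def by auto
  have orth: "inner (ev l) (ev l') = 0" if "l \<in> ?E" "l' \<in> ?E" "l \<noteq> l'" for l l'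
  proof -
    have "inner (M *v ev l) (ev l') = inner (ev l) (M *v ev l')"
      using inner_matrix_vector_transpose[of M] sym by simp
    hence "l * inner (ev l) (ev l') = l' * inner (ev l) (ev l')"
      using ev[OF that(1)] ev[OF that(2)] by simp
    thus ?thesis using that(3) by simp
  qed
  have inj: "inj_on ev ?E"
  proof (rule inj_onI)
    fix l l' assume "l \<in> ?E" "l' \<in> ?E" "ev l = ev l'"
    with orth[of l l'] ev(1)[of l] show "l = l'" by auto
  qed
  have "pairwise orthogonal (ev ` ?E)"
    by (rule pairwise_imageI) (simp add: orthogonal_def orth)
  moreover have "0 \<notin> ev ` ?E"
  proof
    assume "0 \<in> ev ` ?E"
    then obtain l where "0 = ev l" "l \<in> ?E" by (rule imageE)
    thus False using ev(1) by simp
  qed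
  ultimately have "independent (ev ` ?E)"
    by (rule pairwise_orthogonal_independent)
  thus ?thesis
    using inj finiteI_independent finite_imageD by blast
qed

locale psd_matrix =
  fixes M :: "real^'k^'k"
  assumes symmetric: "transpose M = M"
    and qnorm2_nonneg: "qnorm2 M z \<ge> 0"
begin

lemma inner_mult_commute: "inner (M *v a) b = inner (M *v b) a"
  using inner_matrix_vector_transpose[of M a b] symmetric by (simp add: inner_commute)

lemma qnorm2_add: "qnorm2 M (a + b) = qnorm2 M a + 2 * inner (M *v a) b + qnorm2 M b"
  unfolding qnorm2_def using inner_mult_commute[of b a]
  by (simp add: matrix_vector_right_distrib inner_add_left inner_add_right)

lemma qnorm2_diff: "qnorm2 M (a - b) = qnorm2 M a - 2 * inner (M *v a) b + qnorm2 M b"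
  unfolding qnorm2_def using inner_mult_commute[of b a]
  by (simp add: matrix_vector_mult_diff_distrib inner_diff_left inner_diff_right)

lemma three_point_identity:
  "qnorm2 M (p - b) = qnorm2 M (p - c) - qnorm2 M (a - c) + qnorm2 M (a - b)
     - 2 * inner (M *v (c - b)) (a - p)"
proof -
  have "inner (M *v (c - b)) (a - p) = inner (M *v ((a - c) - (p - c))) (c - b)"
    using inner_mult_commute by simp
  thus ?thesis
    using qnorm2_add[of "p - c" "c - b"] qnorm2_add[of "a - c" "c - b"]
    by (simp add: matrix_vector_mult_diff_distrib inner_diff_left)
qed

lemma Cauchy_Schwarz: "(inner (M *v a) b)\<^sup>2 \<le> qnorm2 M a * qnorm2 M b"
proof -
  define A C D where "A = qnorm2 M a" and "C = qnorm2 M b" and "D = inner (M *v a) b"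
  have q: "A + 2 * t * D + t\<^sup>2 * C \<ge> 0" for t
  proof -
    have "qnorm2 M (a + t *\<^sub>R b) = A + 2 * t * D + t\<^sup>2 * C"
      unfolding A_def C_def D_def qnorm2_add qnorm2_scaleR
      by (simp add: matrix_vector_mult_scaleR algebra_simps)
    thus ?thesis using qnorm2_nonneg[of "a + t *\<^sub>R b"] by simp
  qed
  have A0: "A \<ge> 0" and C0: "C \<ge> 0" using qnorm2_nonneg A_def C_def by auto
  show ?thesis
  proof (cases "C > 0")
    case True
    have "C * (A + 2 * (-D/C) * D + (-D/C)\<^sup>2 * C) = A * C - D\<^sup>2"
      using True by (simp add: power2_eq_square field_simps)
    hence "A * C - D\<^sup>2 \<ge> 0" using q[of "-D/C"] True by (metis less_eq_real_def mult_nonneg_nonneg)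
    thus ?thesis unfolding A_def C_def D_def by simp
  next
    case False
    hence "C = 0" using C0 by simp
    have "D = 0"
    proof (rule ccontr)
      assume "D \<noteq> 0"
      hence "A + 2 * (-(A+1)/(2*D)) * D + (-(A+1)/(2*D))\<^sup>2 * C = -1"
        using \<open>C = 0\<close> by (simp add: field_simps)
      thus False using q[of "-(A+1)/(2*D)"] by simp
    qed
    thus ?thesis using A0 \<open>C = 0\<close> unfolding D_def A_def C_def by simp
  qed
qed

lemma Cauchy_Schwarz_abs: "\<bar>inner (M *v a) b\<bar> \<le> sqrt (qnorm2 M a) * sqrt (qnorm2 M b)"
proof -
  have "(inner (M *v a) b)\<^sup>2 \<le> (sqrt (qnorm2 M a) * sqrt (qnorm2 M b))\<^sup>2"
    using Cauchy_Schwarz[of a b] qnorm2_nonneg[of a] qnorm2_nonneg[of b] by (simp add: power_mult_distrib)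
  thus ?thesis using qnorm2_nonneg[of a] qnorm2_nonneg[of b] by (intro power2_le_imp_le[of "\<bar>_\<bar>"]) auto
qed

lemma seminorm_triangle: "sqrt (qnorm2 M (a + b)) \<le> sqrt (qnorm2 M a) + sqrt (qnorm2 M b)"
proof -
  have "qnorm2 M (a + b) \<le> qnorm2 M a + 2 * (sqrt (qnorm2 M a) * sqrt (qnorm2 M b)) + qnorm2 M b"
    unfolding qnorm2_add using Cauchy_Schwarz_abs[of a b] by linarith
  also have "\<dots> = (sqrt (qnorm2 M a) + sqrt (qnorm2 M b))\<^sup>2"
    using qnorm2_nonneg by (simp add: power2_sum)
  finally have "sqrt (qnorm2 M (a + b)) \<le> sqrt ((sqrt (qnorm2 M a) + sqrt (qnorm2 M b))\<^sup>2)"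
    by (rule real_sqrt_le_mono)
  thus ?thesis using qnorm2_nonneg[of a] qnorm2_nonneg[of b] by simp
qed

lemma seminorm_triangle_diff: "sqrt (qnorm2 M (a - b)) \<le> sqrt (qnorm2 M (a - c)) + sqrt (qnorm2 M (c - b))"
  using seminorm_triangle[of "a - c" "c - b"] by simp

lemma seminorm_sum_le: "finite S \<Longrightarrow> sqrt (qnorm2 M (\<Sum>i\<in>S. z i)) \<le> (\<Sum>i\<in>S. sqrt (qnorm2 M (z i)))"
proof (induction S rule: finite_induct)
  case empty thus ?case by (simp add: qnorm2_def)
next
  case (insert j S)
  thus ?case using seminorm_triangle[of "z j" "\<Sum>i\<in>S. z i"] by simp
qed

lemma seminorm_avg_le:
  assumes k: "k \<ge> 1" and bound: "\<And>i. 1 \<le> i \<Longrightarrow> i \<le> k \<Longrightarrow> sqrt (qnorm2 M (z i)) \<le> c"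
  shows "sqrt (qnorm2 M (avg k z)) \<le> c"
proof -
  have "sqrt (qnorm2 M (avg k z)) = (1 / real k) * sqrt (qnorm2 M (\<Sum>i = 1..k. z i))"
    unfolding avg_def qnorm2_scaleR using k by (simp add: real_sqrt_mult)
  also have "\<dots> \<le> (1 / real k) * (\<Sum>i = 1..k. c)"
    using seminorm_sum_le[of "{1..k}" z] bound sum_mono[of "{1..k}" "\<lambda>i. sqrt (qnorm2 M (z i))" "\<lambda>_. c"]
    by (intro mult_left_mono) auto
  also have "\<dots> = c" using k by simp
  finally show ?thesis .
qed

lemma Rayleigh_eigenvector:
  obtains z0 \<mu> where "z0 \<noteq> 0" "M *v z0 = \<mu> *\<^sub>R z0" "\<forall>z. qnorm2 M z \<le> \<mu> * (norm z)\<^sup>2"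
proof -
  obtain z0 where z0: "norm z0 = 1" and z0_max: "\<And>y. norm y = 1 \<Longrightarrow> qnorm2 M y \<le> qnorm2 M z0"
    using continuous_attains_sup[of "sphere 0 1" "qnorm2 M"] continuous_on_qnorm2 by fastforce
  define \<mu> where "\<mu> = qnorm2 M z0"
  have bound: "qnorm2 M z \<le> \<mu> * (norm z)\<^sup>2" for z
  proof (cases "z = 0")
    case True thus ?thesis by (simp add: qnorm2_def)
  next
    case False
    have "qnorm2 M z = (norm z)\<^sup>2 * qnorm2 M ((1 / norm z) *\<^sub>R z)"
      using False by (simp add: qnorm2_scaleR power2_eq_square)
    also have "\<dots> \<le> (norm z)\<^sup>2 * \<mu>"
      using False z0_max[of "(1 / norm z) *\<^sub>R z"] unfolding \<mu>_def by (intro mult_left_mono) auto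
    finally show ?thesis by (simp add: mult.commute)
  qed
  define Q where "Q = \<mu> *\<^sub>R mat 1 - M"
  have qnorm2_Q: "qnorm2 Q z = \<mu> * (norm z)\<^sup>2 - qnorm2 M z" for z
    unfolding Q_def qnorm2_def
    by (simp add: matrix_vector_mult_diff_rdistrib scaleR_matrix_vector_assoc[symmetric]
        inner_diff_left power2_norm_eq_inner)
  interpret Q: psd_matrix Q
  proof
    show "transpose Q = Q"
      unfolding Q_def using symmetric by (simp add: transpose_def vec_eq_iff mat_def)
    show "qnorm2 Q z \<ge> 0" for z using qnorm2_Q bound[of z] by simp
  qed
  \<comment> \<open>z0 is a zero of the psd form of \<mu> I - M, hence lies in its kernel\<close>
  have "(inner (Q *v z0) (Q *v z0))\<^sup>2 \<le> 0"
    using Q.Cauchy_Schwarz[of z0 "Q *v z0"] qnorm2_Q[of z0] z0 \<mu>_def by simp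
  hence "Q *v z0 = 0" by simp
  hence eigen: "M *v z0 = \<mu> *\<^sub>R z0"
    unfolding Q_def by (simp add: matrix_vector_mult_diff_rdistrib scaleR_matrix_vector_assoc[symmetric])
  show ?thesis using z0 eigen bound by (intro that[of z0 \<mu>]) auto
qed

lemma
  shows lambda_max_nonneg: "lambda_max M \<ge> 0"
    and qnorm2_le_lambda_max: "qnorm2 M z \<le> lambda_max M * (norm z)\<^sup>2"
proof -
  obtain z0 \<mu> where z0: "z0 \<noteq> 0" "M *v z0 = \<mu> *\<^sub>R z0" and bound: "\<forall>z. qnorm2 M z \<le> \<mu> * (norm z)\<^sup>2"
    by (rule Rayleigh_eigenvector)
  have Rayleigh_z0: "qnorm2 M z0 = \<mu> * (norm z0)\<^sup>2"
    unfolding qnorm2_def z0(2) by (simp add: power2_norm_eq_inner)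
  have "l \<le> \<mu>" if "v \<noteq> 0" "M *v v = l *\<^sub>R v" for l v
  proof -
    have "qnorm2 M v = l * (norm v)\<^sup>2" unfolding qnorm2_def that(2) by (simp add: power2_norm_eq_inner)
    thus ?thesis using bound[rule_format, of v] that(1) by simp
  qed
  hence "lambda_max M = \<mu>"
    unfolding lambda_max_def using symmetric_eigenvalues_finite[OF symmetric] z0 by (intro Max_eqI) auto
  moreover have "\<mu> \<ge> 0" using Rayleigh_z0 qnorm2_nonneg[of z0] z0(1) by (simp add: zero_le_mult_iff)
  ultimately show "lambda_max M \<ge> 0" "qnorm2 M z \<le> lambda_max M * (norm z)\<^sup>2"
    using bound by auto
qed

lemma norm_mult_sq_le_lambda_max: "(norm (M *v z))\<^sup>2 \<le> lambda_max M * qnorm2 M z"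
proof -
  define w where "w = M *v z"
  have "((norm w)\<^sup>2)\<^sup>2 = (inner (M *v z) w)\<^sup>2" unfolding w_def by (simp add: power2_norm_eq_inner)
  also have "\<dots> \<le> qnorm2 M z * qnorm2 M w" by (rule Cauchy_Schwarz)
  also have "\<dots> \<le> qnorm2 M z * (lambda_max M * (norm w)\<^sup>2)"
    using qnorm2_le_lambda_max[of w] qnorm2_nonneg[of z] by (simp add: mult_left_mono)
  finally have ineq: "(norm w)\<^sup>2 * (norm w)\<^sup>2 \<le> (lambda_max M * qnorm2 M z) * (norm w)\<^sup>2"
    by (simp only: power2_eq_square[of "(norm w)\<^sup>2"] mult_ac)
  show ?thesis
  proof (cases "w = 0")
    case True
    thus ?thesis using lambda_max_nonneg qnorm2_nonneg[of z] by (simp add: w_def)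
  next
    case False
    hence "(norm w)\<^sup>2 > 0" by simp
    from mult_right_le_imp_le[OF ineq this] show ?thesis unfolding w_def .
  qed
qed

end

section \<open>Averages\<close>

lemma avg_Suc:
  "k \<ge> 1 \<Longrightarrow> avg (Suc k) z = (1 - 1 / real (Suc k)) *\<^sub>R avg k z + (1 / real (Suc k)) *\<^sub>R z (Suc k)"
  unfolding avg_def by (simp add: scaleR_add_right field_simps)

lemma avg_add: "avg k (\<lambda>i. z i + z' i) = avg k z + avg k z'"
  unfolding avg_def by (simp add: sum.distrib scaleR_add_right)

lemma avg_diff: "avg k (\<lambda>i. z i - z' i) = avg k z - avg k z'"
  unfolding avg_def by (simp add: sum_subtractf scaleR_diff_right)

lemma avg_const: "k \<ge> 1 \<Longrightarrow> avg k (\<lambda>i. c) = c"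
  unfolding avg_def by (simp add: sum_constant_scaleR)

lemma avg_cong: "(\<And>i. 1 \<le> i \<Longrightarrow> i \<le> k \<Longrightarrow> z i = z' i) \<Longrightarrow> avg k z = avg k z'"
  unfolding avg_def by (metis atLeastAtMost_iff sum.cong)

lemma avg_matrix_vector_mult: "avg k (\<lambda>i. A *v z i) = A *v avg k z" for A :: "real^'n^'m"
  unfolding avg_def by (simp add: matrix_vector_mult_sum matrix_vector_mult_scaleR)

lemma avg_blk3: "avg k (\<lambda>i. blk3 (x i) (y i) (g i)) = blk3 (avg k x) (avg k y) (avg k g)"
  unfolding avg_def by (simp add: sum_blk3 blk3_scaleR)

lemma sum_eq_avg: "k \<ge> 1 \<Longrightarrow> (\<Sum>i = 1..k. z i) = real k *\<^sub>R avg k z"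
  unfolding avg_def by simp

lemma sum_pred_diff_telescope: "(\<Sum>i = 1..(k::nat). F (i - 1) - F i) = F 0 - (F k :: 'a::ab_group_add)"
  by (induction k) (simp_all add: algebra_simps)

section \<open>Convex analysis\<close>

lemma mem_subdiff_iff: "s \<in> subdiff h x \<longleftrightarrow> (\<forall>z. h z \<ge> h x + ereal (inner s (z - x)))"
  by (simp add: subdiff_def eps_subdiff_def)

lemma proper_subdiff_finite:
  assumes "proper_fun h" "s \<in> subdiff h x"
  obtains c where "h x = ereal c"
proof -
  obtain z where "h z \<noteq> \<infinity>" using assms(1) unfolding proper_fun_def by auto
  moreover have "h z \<ge> h x + ereal (inner s (z - x))" using assms(2) mem_subdiff_iff by blast
  ultimately have "h x \<noteq> \<infinity>" by auto
  moreover have "h x \<noteq> -\<infinity>" using assms(1) unfolding proper_fun_def by auto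
  ultimately show ?thesis using that by (cases "h x") auto
qed

lemma subgradient_ineq:
  assumes "s \<in> subdiff h x" "h x = ereal c" "h z = ereal d"
  shows "d \<ge> c + inner s (z - x)"
  using assms mem_subdiff_iff[of s h x] by (metis plus_ereal.simps(1) ereal_less_eq(3))

lemma subdiff_monotone:
  assumes "proper_fun h" "s \<in> subdiff h x" "s' \<in> subdiff h x'"
  shows "inner (s - s') (x - x') \<ge> 0"
proof -
  obtain c c' where "h x = ereal c" "h x' = ereal c'"
    using proper_subdiff_finite assms by metis
  thus ?thesis
    using subgradient_ineq[OF assms(2)] subgradient_ineq[OF assms(3)]
    by (force simp: inner_diff_left inner_diff_right algebra_simps)
qed

lemma zero_in_shifted_image_iff: "0 \<in> (\<lambda>s. s - c) ` X \<longleftrightarrow> c \<in> X" for c :: "'a::ab_group_add"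
  by (auto simp: image_iff)

lemma ereal_diff_add_eq: "(e - ereal a) + ereal c = e + ereal (c - a)"
  by (cases e) auto

lemma convex_fun_avg_le:
  assumes cvx: "convex_fun h" and "k \<ge> 1" and fin: "\<And>i. 1 \<le> i \<Longrightarrow> i \<le> k \<Longrightarrow> h (z i) = ereal (c i)"
  shows "h (avg k z) \<le> ereal ((1 / real k) * (\<Sum>i = 1..k. c i))"
  using \<open>k \<ge> 1\<close> fin
proof (induction k rule: nat_induct_at_least)
  case base thus ?case by (simp add: avg_def)
next
  case (Suc k)
  define t where "t = 1 / real (Suc k)"
  have t: "0 < t" "t < 1" using Suc.hyps unfolding t_def by (auto simp: divide_less_eq)
  have "h (avg (Suc k) z) = h ((1 - t) *\<^sub>R avg k z + t *\<^sub>R z (Suc k))"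
    by (subst avg_Suc[OF Suc.hyps]) (simp add: t_def)
  also have "\<dots> \<le> ereal (1 - t) * h (avg k z) + ereal t * h (z (Suc k))"
    using cvx t unfolding convex_fun_def by blast
  also have "\<dots> \<le> ereal (1 - t) * ereal ((1 / real k) * (\<Sum>i = 1..k. c i)) + ereal t * ereal (c (Suc k))"
    using Suc.IH Suc.prems t by (intro add_mono ereal_mult_left_mono) auto
  also have "\<dots> = ereal ((1 / real (Suc k)) * (\<Sum>i = 1..Suc k. c i))"
  proof -
    have "(1 - t) * (1 / real k) = 1 / real (Suc k)" using Suc.hyps by (simp add: t_def field_simps)
    hence "(1 - t) * ((1 / real k) * (\<Sum>i = 1..k. c i)) = (1 / real (Suc k)) * (\<Sum>i = 1..k. c i)"
      by (metis mult.assoc)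
    thus ?thesis by (simp add: t_def distrib_left)
  qed
  finally show ?case .
qed

text \<open>The transportation formula: averaging subgradients taken at different points yields an
  \<open>\<epsilon>\<close>-subgradient at the averaged point, with \<open>\<epsilon>\<close> the mean linearisation gap.\<close>

lemma avg_subgradients_eps_subdiff:
  fixes h :: "'a::real_inner \<Rightarrow> ereal"
  assumes proper: "proper_fun h" and cvx: "convex_fun h" and k: "k \<ge> 1"
    and sub: "\<And>i. 1 \<le> i \<Longrightarrow> i \<le> k \<Longrightarrow> s i \<in> subdiff h (z i)"
  defines "\<epsilon> \<equiv> (1 / real k) * (\<Sum>i = 1..k. inner (s i) (z i - avg k z))"
  shows "\<epsilon> \<ge> 0" and "avg k s \<in> eps_subdiff h \<epsilon> (avg k z)"
proof -
  define c where "c i = real_of_ereal (h (z i))" for i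
  have hc: "h (z i) = ereal (c i)" if "1 \<le> i" "i \<le> k" for i
    using proper_subdiff_finite[OF proper sub[OF that]] c_def by (metis real_of_ereal.simps(1))
  define C where "C = (1 / real k) * (\<Sum>i = 1..k. c i)"
  have key: "d \<ge> C + inner (avg k s) (w - avg k z) - \<epsilon>" if hw: "h w = ereal d" for w d
  proof -
    have "(\<Sum>i = 1..k. c i + inner (s i) (w - z i)) \<le> (\<Sum>i = 1..k. d)"
      using subgradient_ineq[OF sub hc hw] by (intro sum_mono) auto
    moreover have "(\<Sum>i = 1..k. c i + inner (s i) (w - z i))
        = (\<Sum>i = 1..k. c i) + (\<Sum>i = 1..k. inner (s i) (w - avg k z)) - (\<Sum>i = 1..k. inner (s i) (z i - avg k z))"
      by (simp add: sum.distrib sum_subtractf inner_diff_right)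
    moreover have "(\<Sum>i = 1..k. inner (s i) (w - avg k z)) = real k * inner (avg k s) (w - avg k z)"
      using k unfolding avg_def by (simp add: inner_sum_left)
    moreover have "(\<Sum>i = 1..k. inner (s i) (z i - avg k z)) = real k * \<epsilon>"
      using k unfolding \<epsilon>_def by simp
    ultimately have "real k * (C + inner (avg k s) (w - avg k z) - \<epsilon>) \<le> real k * d"
      using k unfolding C_def by (simp add: algebra_simps)
    thus ?thesis using k by simp
  qed
  have Jensen: "h (avg k z) \<le> ereal C"
    unfolding C_def by (rule convex_fun_avg_le[OF cvx k hc])
  moreover have "h (avg k z) \<noteq> -\<infinity>" using proper unfolding proper_fun_def by auto
  ultimately obtain e where e: "h (avg k z) = ereal e" and "e \<le> C"
    by (cases "h (avg k z)") auto
  thus "\<epsilon> \<ge> 0" using key[OF e] by simp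
  show "avg k s \<in> eps_subdiff h \<epsilon> (avg k z)"
    unfolding eps_subdiff_def
  proof (intro CollectI allI)
    fix w
    show "h w \<ge> h (avg k z) + ereal (inner (avg k s) (w - avg k z) - \<epsilon>)"
    proof (cases "h w")
      case (real d)
      thus ?thesis using key[OF real] e \<open>e \<le> C\<close> by simp
    qed (use e proper in \<open>auto simp: proper_fun_def\<close>)
  qed
qed

lemma nonneg_if_perturbations_nonneg:
  fixes a c :: real
  assumes "\<And>t. 0 < t \<Longrightarrow> t < 1 \<Longrightarrow> a + t * c \<ge> 0"
  shows "a \<ge> 0"
proof (rule ccontr)
  assume a: "\<not> a \<ge> 0"
  define t where "t = min (1/2) (- a / (2 * \<bar>c\<bar> + 1))"
  have "- a / (2 * \<bar>c\<bar> + 1) > 0" using a by (intro divide_pos_pos) auto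
  hence t: "0 < t" "t < 1" unfolding t_def by auto
  have "t * c \<le> t * \<bar>c\<bar>" using t by (simp add: mult_left_mono)
  also have "\<dots> \<le> (- a / (2 * \<bar>c\<bar> + 1)) * \<bar>c\<bar>" unfolding t_def by (intro mult_right_mono) auto
  also have "\<dots> < - a"
    using a mult_nonpos_nonneg[of a "\<bar>c\<bar>"] by (simp add: field_simps)
  finally show False using assms[OF t] by simp
qed

lemma minimizer_neg_gradient_subdiff:
  fixes g :: "'a::real_inner \<Rightarrow> ereal"
  assumes proper: "proper_fun g" and cvx: "convex_fun g"
    and opt: "\<And>y'. g y0 + ereal (q y0) \<le> g y' + ereal (q y')"
    and expand: "\<And>y' t. q (y0 + t *\<^sub>R (y' - y0)) = q y0 + t * inner dq (y' - y0) + t\<^sup>2 * cq y'"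
  shows "- dq \<in> subdiff g y0"
proof -
  obtain y1 where "g y1 \<noteq> \<infinity>" using proper unfolding proper_fun_def by auto
  hence "g y0 \<noteq> \<infinity>" using opt[of y1] by (cases "g y1"; cases "g y0") auto
  then obtain a where a: "g y0 = ereal a" using proper unfolding proper_fun_def by (cases "g y0") auto
  show ?thesis unfolding mem_subdiff_iff
  proof
    fix w
    show "g w \<ge> g y0 + ereal (inner (- dq) (w - y0))"
    proof (cases "g w")
      case (real d)
      have "d - a + inner dq (w - y0) + t * cq w \<ge> 0" if t: "0 < t" "t < 1" for t
      proof -
        have "(1 - t) *\<^sub>R y0 + t *\<^sub>R w = y0 + t *\<^sub>R (w - y0)" by (simp add: algebra_simps)
        hence "g (y0 + t *\<^sub>R (w - y0)) \<le> ereal ((1 - t) * a + t * d)"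
          using cvx t a real unfolding convex_fun_def by (metis times_ereal.simps(1) plus_ereal.simps(1))
        hence "ereal (a + q y0) \<le> ereal ((1 - t) * a + t * d) + ereal (q (y0 + t *\<^sub>R (w - y0)))"
          using opt[of "y0 + t *\<^sub>R (w - y0)"] a by (metis add_right_mono order_trans plus_ereal.simps(1))
        hence "0 \<le> t * (d - a + inner dq (w - y0) + t * cq w)"
          unfolding expand by (simp add: algebra_simps power2_eq_square)
        thus ?thesis using t by (simp add: zero_le_mult_iff)
      qed
      hence "d - a + inner dq (w - y0) \<ge> 0" by (rule nonneg_if_perturbations_nonneg)
      thus ?thesis using a real by simp
    qed (use proper in \<open>auto simp: proper_fun_def\<close>)
  qed
qed

section \<open>Scalar inequalities\<close>

text \<open>With \<open>t = 1 - \<tau> - \<sigma>\<close>, \<open>s = \<sigma>\<close>, \<open>v = 1 + \<tau>\<close>, \<open>u = 1 - \<theta>\<close> (where \<open>\<sigma>\<close> is \<open>st\<close>) the defining inequality of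
  \<open>region_R\<close> becomes \<open>reg\<close> below, and the conclusion says that the radicand of \<open>vartheta\<close> exceeds
  \<open>(2 t)\<^sup>2\<close>.\<close>

lemma vartheta_radicand_gt:
  fixes t s v u :: real
  assumes t: "t>0" and s: "s\<ge>0" and v: "v>0" and reg: "(t+s) * v * (t+u) - u\<^sup>2 * t > 0"
  shows "(3*t+s)*(2*t+v+u) > 4*t\<^sup>2"
proof (cases "v+u \<ge> 0")
  case True
  have "(3*t+s)*(2*t+v+u) \<ge> (3*t+s)*(2*t)"
    using True t s by (intro mult_left_mono) auto
  moreover have "(3*t+s)*(2*t) \<ge> 6*t\<^sup>2" using t s by (simp add: power2_eq_square algebra_simps)
  ultimately show ?thesis using t by (smt (verit) zero_less_power)
next
  case False
  define m where "m = -u"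
  have mv: "m > v" using False m_def by simp
  have m0: "m > 0" using mv v by simp
  have "m\<^sup>2 * t > 0" using m0 t by simp
  hence "(t+s) * v * (t-m) > 0" using reg m_def by simp
  moreover have "(t+s) * v > 0" using t s v by simp
  ultimately have tm: "t - m > 0" by (metis zero_less_mult_pos)
  have q1: "2*t\<^sup>2-5*t*m+6*m\<^sup>2 \<ge> 0"
  proof -
    have "2*t\<^sup>2-5*t*m+6*m\<^sup>2 = 2*(t-5/4*m)\<^sup>2 + 23/8*m\<^sup>2" by (simp add: power2_eq_square algebra_simps)
    moreover have "0 \<le> 2*(t-5/4*m)\<^sup>2 + 23/8*m\<^sup>2" by (intro add_nonneg_nonneg) auto
    ultimately show ?thesis by simp
  qed
  have q2: "2*t\<^sup>2-5*t*m+4*m\<^sup>2 \<ge> 0"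
  proof -
    have "2*t\<^sup>2-5*t*m+4*m\<^sup>2 = 2*(t-5/4*m)\<^sup>2 + 7/8*m\<^sup>2" by (simp add: power2_eq_square algebra_simps)
    moreover have "0 \<le> 2*(t-5/4*m)\<^sup>2 + 7/8*m\<^sup>2" by (intro add_nonneg_nonneg) auto
    ultimately show ?thesis by simp
  qed
  have e1: "t\<^sup>2*(2*t\<^sup>2-5*t*m+6*m\<^sup>2) \<ge> 0" using q1 by simp
  have e2: "s*t*(2*t\<^sup>2-5*t*m+4*m\<^sup>2) \<ge> 0" using q2 s t by simp
  have e3: "s*(t+s)*(t-m)*(2*t-m) \<ge> 0" using s t tm by simp
  have e4: "(3*t+s)*((t+s) * v * (t-m) - m\<^sup>2*t) > 0" using reg m_def t s by simp
  have iden: "(t+s)*(t-m)*((3*t+s)*(2*t+v-m) - 4*t\<^sup>2)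
     = t\<^sup>2*(2*t\<^sup>2-5*t*m+6*m\<^sup>2) + s*t*(2*t\<^sup>2-5*t*m+4*m\<^sup>2) + s*(t+s)*(t-m)*(2*t-m)
       + (3*t+s)*((t+s) * v * (t-m) - m\<^sup>2*t)"
    by (simp add: power2_eq_square algebra_simps)
  have "(t+s)*(t-m)*((3*t+s)*(2*t+v-m) - 4*t\<^sup>2) > 0" using iden e1 e2 e3 e4 by linarith
  moreover have "(t+s)*(t-m) > 0" using t s tm by simp
  ultimately have "(3*t+s)*(2*t+v-m) - 4*t\<^sup>2 > 0" by (metis zero_less_mult_pos)
  thus ?thesis using m_def by simp
qed

lemma region_R_vartheta_pos:
  assumes "0 \<le> st" "st < 1" "(\<tau>, \<theta>) \<in> region_R st"
  shows "vartheta st \<tau> \<theta> > 0" "3 - 3 * \<tau> - 2 * st > 0" "4 - \<tau> - \<theta> - 2 * st > 0"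
proof -
  define t where "t = 1 - \<tau> - st"
  define v where "v = 1 + \<tau>"
  define u where "u = 1 - \<theta>"
  have R: "-1 < \<tau>" "\<tau> < 1 - st" "\<tau> + \<theta> > 0"
     "(1 - \<tau>\<^sup>2) * (2 - \<tau> - \<theta> - st) - (1 - \<theta>)\<^sup>2 * (1 - \<tau> - st) > 0"
    using assms(3) unfolding region_R_def by auto
  have t0: "t > 0" using R t_def by simp
  have v0: "v > 0" using R v_def by simp
  have reg: "(t+st) * v * (t+u) - u\<^sup>2 * t > 0"
  proof -
    have "(t+st) * v * (t+u) - u\<^sup>2 * t = (1 - \<tau>\<^sup>2) * (2 - \<tau> - \<theta> - st) - (1 - \<theta>)\<^sup>2 * (1 - \<tau> - st)"
      unfolding t_def v_def u_def by (simp add: power2_eq_square algebra_simps)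
    thus ?thesis using R by simp
  qed
  have main: "(3*t+st)*(2*t+v+u) > 4*t\<^sup>2" using vartheta_radicand_gt[OF t0 assms(1) v0 reg] .
  have eq: "(3 - 3 * \<tau> - 2 * st) * (4 - \<tau> - \<theta> - 2 * st) = (3*t+st)*(2*t+v+u)"
    unfolding t_def v_def u_def by (simp add: algebra_simps)
  have P0: "3 - 3 * \<tau> - 2 * st > 0" using t0 assms(1) unfolding t_def by simp
  show "3 - 3 * \<tau> - 2 * st > 0" by (rule P0)
  have "(3 - 3 * \<tau> - 2 * st) * (4 - \<tau> - \<theta> - 2 * st) > 0" using main eq t0 by (smt (verit) zero_less_power)
  thus "4 - \<tau> - \<theta> - 2 * st > 0" using P0 by (metis zero_less_mult_pos)
  have "(2*t)\<^sup>2 < (3 - 3 * \<tau> - 2 * st) * (4 - \<tau> - \<theta> - 2 * st)"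
    using main eq by (simp add: power2_eq_square)
  hence "sqrt ((3 - 3 * \<tau> - 2 * st) * (4 - \<tau> - \<theta> - 2 * st)) > 2*t" by (rule real_less_rsqrt)
  thus "vartheta st \<tau> \<theta> > 0" unfolding vartheta_def t_def by simp
qed

lemma quadratic_form_nonneg:
  fixes A B C q X Y :: real
  assumes A: "A > 0" and AC: "A * C \<ge> B\<^sup>2" and q: "q\<^sup>2 \<le> X * Y" and hX: "X \<ge> 0" and hY: "Y \<ge> 0"
  shows "A * X - 2 * B * q + C * Y \<ge> 0"
proof -
  define s1 where "s1 = sqrt X"
  define s2 where "s2 = sqrt Y"
  have X': "X = s1\<^sup>2" "Y = s2\<^sup>2" using hX hY s1_def s2_def by simp_all
  have s0: "s1 \<ge> 0" "s2 \<ge> 0" using s1_def s2_def hX hY by simp_all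
  have "q\<^sup>2 \<le> (s1 * s2)\<^sup>2" using q X' by (simp add: power_mult_distrib)
  hence qa: "\<bar>q\<bar> \<le> s1 * s2" using s0 by (metis abs_le_square_iff abs_of_nonneg mult_nonneg_nonneg)
  have "B * q \<le> \<bar>B\<bar> * (s1 * s2)"
    by (metis abs_ge_self abs_mult abs_of_nonneg mult_left_mono abs_ge_zero qa order_trans)
  moreover have "A * (A * s1\<^sup>2 - 2 * \<bar>B\<bar> * (s1 * s2) + C * s2\<^sup>2) = (A * s1 - \<bar>B\<bar> * s2)\<^sup>2 + (A * C - B\<^sup>2) * s2\<^sup>2"
    by (simp add: power2_eq_square algebra_simps)
  hence "A * (A * s1\<^sup>2 - 2 * \<bar>B\<bar> * (s1 * s2) + C * s2\<^sup>2) \<ge> 0" using AC by simp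
  hence "A * s1\<^sup>2 - 2 * \<bar>B\<bar> * (s1 * s2) + C * s2\<^sup>2 \<ge> 0" using A by (simp add: zero_le_mult_iff)
  moreover have "A * X - 2 * B * q + C * Y = A * s1\<^sup>2 - 2 * (B * q) + C * s2\<^sup>2" using X' by simp
  ultimately show ?thesis by linarith
qed

text \<open>The scalar core of the relative-error inequality. In the application (\<open>admm.rel_error_step\<close>)
  the variables are the quantities of the same names at iteration \<open>i\<close>, primed ones belong to
  iteration \<open>i - 1\<close>, and \<open>q\<close>, \<open>hh\<close> are the cross terms \<open>\<langle>res (i - 1), dBy i\<rangle>\<close> and
  \<open>\<langle>H (y (i - 1) - y (i - 2)), y i - y (i - 1)\<rangle>\<close>. The identity \<open>iden\<close> writes the difference of the
  two sides as a sum of nonnegative terms.\<close>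

lemma rel_error_step_arith:
  fixes \<beta> \<tau> \<theta> \<sigma> st sh rr pp rp hy gx ex rr' q hy' hh :: real
  assumes b: "\<beta> > 0" and tt: "\<tau> + \<theta> > 0" and t1: "1 + \<tau> > 0"
    and ex: "ex \<le> st * \<beta> * (rr - 2 * rp + pp) + sh * gx" and shs: "sh \<le> \<sigma>" and gx: "gx \<ge> 0"
    and hy: "hy \<ge> 0"
    and mono: "(1-\<theta>)*\<beta>*q - (1+\<tau>)*\<beta>*rp + \<tau>*\<beta>*pp - hy + hh \<ge> 0"
    and hh: "2 * hh \<le> hy + hy'"
    and q2: "q\<^sup>2 \<le> rr' * pp" and rr': "rr' \<ge> 0" and pp: "pp \<ge> 0" and s0: "\<sigma> \<ge> 0"
    and ph: "phi st \<tau> \<theta> \<sigma> \<ge> 0" "phi_tilde st \<tau> \<theta> \<sigma> > 0" "phi_bar st \<tau> \<theta> \<sigma> \<ge> 0"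
  shows "ex + \<beta>/(\<tau>+\<theta>) * ((\<tau>+\<theta>-1)\<^sup>2*rr + 2*(\<tau>+\<theta>-1)*(1-\<tau>)*rp + (1-\<tau>)\<^sup>2*pp)
   \<le> \<sigma>*(gx + hy + \<beta>*(1-\<tau>)*pp + \<beta>/(\<tau>+\<theta>)*(rr - 2*(1-\<tau>)*rp + (1-\<tau>)\<^sup>2*pp))
     + \<beta>/(\<tau>+\<theta>)*(phi_tilde st \<tau> \<theta> \<sigma>*rr' + phi st \<tau> \<theta> \<sigma>/((1+\<tau>)*\<beta>)*hy')
     - \<beta>/(\<tau>+\<theta>)*(phi_tilde st \<tau> \<theta> \<sigma>*rr + phi st \<tau> \<theta> \<sigma>/((1+\<tau>)*\<beta>)*hy)"
proof -
  define c1 where "c1 = 1 / (\<tau> + \<theta>)"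
  define c2 where "c2 = 1 / (1 + \<tau>)"
  define cb where "cb = 1 / \<beta>"
  have c1: "c1 * (\<tau> + \<theta>) = 1" using tt c1_def by simp
  have c2: "c2 * (1 + \<tau>) = 1" using t1 c2_def by simp
  have cb: "cb * \<beta> = 1" using b cb_def by simp
  have c0: "c1 > 0" "c2 > 0" using tt t1 c1_def c2_def by simp_all
  have r1: "\<beta>/(\<tau>+\<theta>) = \<beta>*c1" using c1_def by simp
  have r2: "phi st \<tau> \<theta> \<sigma>/((1+\<tau>)*\<beta>) = phi st \<tau> \<theta> \<sigma>*c2*cb" using c2_def cb_def by simp
  define Ph where "Ph = phi st \<tau> \<theta> \<sigma>"
  define Pt where "Pt = phi_tilde st \<tau> \<theta> \<sigma>"
  define Phat where "Phat = phi_hat st \<tau> \<theta> \<sigma>"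
  have iden: "(\<sigma>*(gx + hy + \<beta>*(1-\<tau>)*pp + \<beta>*c1*(rr - 2*(1-\<tau>)*rp + (1-\<tau>)\<^sup>2*pp))
     + \<beta>*c1*(Pt*rr' + Ph*c2*cb*hy') - \<beta>*c1*(Pt*rr + Ph*c2*cb*hy))
   - (ex + \<beta>*c1 * ((\<tau>+\<theta>-1)\<^sup>2*rr + 2*(\<tau>+\<theta>-1)*(1-\<tau>)*rp + (1-\<tau>)\<^sup>2*pp))
   = (\<sigma>-sh)*gx + (st*\<beta>*(rr-2*rp+pp) + sh*gx - ex)
     + c1*c2*(\<beta>*((1+\<tau>)*Pt * rr' - 2*(Ph*(1-\<theta>))*q + ((1+\<tau>)*Phat - 2*\<tau>*Ph)*pp)
        + 2*Ph*((1-\<theta>)*\<beta>*q - (1+\<tau>)*\<beta>*rp + \<tau>*\<beta>*pp - hy + hh)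
        + Ph*(hy+hy'-2*hh) + (1+\<tau>)*\<sigma>*(\<tau>+\<theta>)*hy)"
    using c1 c2 cb unfolding Ph_def Pt_def Phat_def phi_def phi_hat_def phi_tilde_def
    by algebra
  have Q: "(1+\<tau>)*Pt * rr' - 2*(Ph*(1-\<theta>))*q + ((1+\<tau>)*Phat - 2*\<tau>*Ph)*pp \<ge> 0"
  proof (rule quadratic_form_nonneg[OF _ _ q2 rr' pp])
    show "(1+\<tau>)*Pt > 0" using t1 ph(2) Pt_def by simp
    have "(1+\<tau>)*Pt * ((1+\<tau>)*Phat - 2*\<tau>*Ph) - (Ph*(1-\<theta>))\<^sup>2 = phi_bar st \<tau> \<theta> \<sigma>"
      unfolding phi_bar_def Pt_def Ph_def Phat_def by (simp add: power2_eq_square algebra_simps)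
    thus "(1+\<tau>)*Pt * ((1+\<tau>)*Phat - 2*\<tau>*Ph) \<ge> (Ph*(1-\<theta>))\<^sup>2" using ph(3) by simp
  qed
  have T1: "\<beta>*((1+\<tau>)*Pt * rr' - 2*(Ph*(1-\<theta>))*q + ((1+\<tau>)*Phat - 2*\<tau>*Ph)*pp) \<ge> 0" using Q b by simp
  have T2: "2*Ph*((1-\<theta>)*\<beta>*q - (1+\<tau>)*\<beta>*rp + \<tau>*\<beta>*pp - hy + hh) \<ge> 0" using mono ph(1) Ph_def by simp
  have T3: "Ph*(hy+hy'-2*hh) \<ge> 0" using hh ph(1) Ph_def by simp
  have T4: "(1+\<tau>)*\<sigma>*(\<tau>+\<theta>)*hy \<ge> 0" using t1 s0 tt hy by simp
  have T5: "c1*c2*(\<beta>*((1+\<tau>)*Pt * rr' - 2*(Ph*(1-\<theta>))*q + ((1+\<tau>)*Phat - 2*\<tau>*Ph)*pp)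
        + 2*Ph*((1-\<theta>)*\<beta>*q - (1+\<tau>)*\<beta>*rp + \<tau>*\<beta>*pp - hy + hh)
        + Ph*(hy+hy'-2*hh) + (1+\<tau>)*\<sigma>*(\<tau>+\<theta>)*hy) \<ge> 0"
    using T1 T2 T3 T4 c0 by simp
  have T6: "(\<sigma>-sh)*gx \<ge> 0" using shs gx by simp
  have T7: "st*\<beta>*(rr-2*rp+pp) + sh*gx - ex \<ge> 0" using ex by simp
  show ?thesis unfolding r1 r2 using iden T5 T6 T7 unfolding Ph_def Pt_def by linarith
qed

lemma rel_error_first_arith:
  fixes \<beta> \<tau> \<theta> \<sigma> st sh rr pp rp hy gx ex a0 tv :: real
  assumes b: "\<beta> > 0" and tt: "\<tau> + \<theta> > 0" and t1: "1 + \<tau> > 0" and htv: "tv > 0"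
    and ex: "ex \<le> st * \<beta> * (rr - 2 * rp + pp) + sh * gx" and shs: "sh \<le> \<sigma>" and gx: "gx \<ge> 0"
    and hy: "hy \<ge> 0" and pp: "pp \<ge> 0" and s0: "\<sigma> \<ge> 0"
    and K1: "\<beta> * tv * rp \<le> 2 * a0" and K2: "hy \<le> 2 * a0"
    and ph: "phi st \<tau> \<theta> \<sigma> \<ge> 0" "phi_hat st \<tau> \<theta> \<sigma> \<ge> 0"
  shows "ex + \<beta>/(\<tau>+\<theta>) * ((\<tau>+\<theta>-1)\<^sup>2*rr + 2*(\<tau>+\<theta>-1)*(1-\<tau>)*rp + (1-\<tau>)\<^sup>2*pp)
   \<le> \<sigma>*(gx + hy + \<beta>*(1-\<tau>)*pp + \<beta>/(\<tau>+\<theta>)*(rr - 2*(1-\<tau>)*rp + (1-\<tau>)\<^sup>2*pp))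
     + 4 * (1 + \<tau> + tv) * phi st \<tau> \<theta> \<sigma> / ((\<tau> + \<theta>) * (1 + \<tau>) * tv) * a0
     - \<beta>/(\<tau>+\<theta>)*(phi_tilde st \<tau> \<theta> \<sigma>*rr + phi st \<tau> \<theta> \<sigma>/((1+\<tau>)*\<beta>)*hy)"
proof -
  define c1 where "c1 = 1 / (\<tau> + \<theta>)"
  define c2 where "c2 = 1 / (1 + \<tau>)"
  define cb where "cb = 1 / \<beta>"
  define cv where "cv = 1 / tv"
  have c1: "c1 * (\<tau> + \<theta>) = 1" using tt c1_def by simp
  have c2: "c2 * (1 + \<tau>) = 1" using t1 c2_def by simp
  have cb: "cb * \<beta> = 1" using b cb_def by simp
  have cv: "cv * tv = 1" using htv cv_def by simp
  have c0: "c1 > 0" "c2 > 0" "cv > 0" using tt t1 htv c1_def c2_def cv_def by simp_all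
  have r1: "\<beta>/(\<tau>+\<theta>) = \<beta>*c1" using c1_def by simp
  have r2: "phi st \<tau> \<theta> \<sigma>/((1+\<tau>)*\<beta>) = phi st \<tau> \<theta> \<sigma>*c2*cb" using c2_def cb_def by simp
  have r3: "4 * (1 + \<tau> + tv) * phi st \<tau> \<theta> \<sigma> / ((\<tau> + \<theta>) * (1 + \<tau>) * tv) = 4 * (1 + \<tau> + tv) * phi st \<tau> \<theta> \<sigma> * c1 * c2 * cv"
    using c1_def c2_def cv_def by simp
  define Ph where "Ph = phi st \<tau> \<theta> \<sigma>"
  define Pt where "Pt = phi_tilde st \<tau> \<theta> \<sigma>"
  define Phat where "Phat = phi_hat st \<tau> \<theta> \<sigma>"
  have iden: "(\<sigma>*(gx + hy + \<beta>*(1-\<tau>)*pp + \<beta>*c1*(rr - 2*(1-\<tau>)*rp + (1-\<tau>)\<^sup>2*pp))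
     + 4 * (1 + \<tau> + tv) * Ph * c1 * c2 * cv * a0 - \<beta>*c1*(Pt*rr + Ph*c2*cb*hy))
   - (ex + \<beta>*c1 * ((\<tau>+\<theta>-1)\<^sup>2*rr + 2*(\<tau>+\<theta>-1)*(1-\<tau>)*rp + (1-\<tau>)\<^sup>2*pp))
   = (\<sigma>-sh)*gx + (st*\<beta>*(rr-2*rp+pp) + sh*gx - ex)
     + c1*\<beta>*Phat*pp + c1*\<sigma>*(\<tau>+\<theta>)*hy + 2*Ph*c1*cv*(2*a0 - \<beta>*tv*rp) + Ph*c1*c2*(4*a0 - hy)"
    using c1 c2 cb cv unfolding Ph_def Pt_def Phat_def phi_def phi_hat_def phi_tilde_def
    by algebra
  have T1: "c1*\<beta>*Phat*pp \<ge> 0" using c0 b ph(2) pp Phat_def by simp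
  have T2: "c1*\<sigma>*(\<tau>+\<theta>)*hy \<ge> 0" using c0 s0 tt hy by simp
  have T3: "2*Ph*c1*cv*(2*a0 - \<beta>*tv*rp) \<ge> 0" using c0 ph(1) K1 Ph_def by simp
  have T4: "Ph*c1*c2*(4*a0 - hy) \<ge> 0" using c0 ph(1) K2 hy Ph_def by simp
  have T6: "(\<sigma>-sh)*gx \<ge> 0" using shs gx by simp
  have T7: "st*\<beta>*(rr-2*rp+pp) + sh*gx - ex \<ge> 0" using ex by simp
  show ?thesis unfolding r1 r2 r3 using iden T1 T2 T3 T4 T6 T7 unfolding Ph_def Pt_def by linarith
qed

lemma cross_term_lower_bounds:
  fixes P Qc t rp rr pp :: real
  assumes P: "P > 0" and Qc: "Qc > 0" and t: "t \<ge> 0" and th: "sqrt (P * Qc) - 2 * t \<ge> 0"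
    and cs: "rp\<^sup>2 \<le> rr * pp" and rr: "rr \<ge> 0" and pp: "pp \<ge> 0"
  shows "Qc * rr + P * pp - 4 * t * rp \<ge> 2 * (sqrt (P * Qc) - 2 * t) * rp"
    and "Qc * rr + P * pp - 4 * t * rp \<ge> 0"
proof -
  define S where "S = sqrt (P * Qc)"
  define m where "m = sqrt (rr * pp)"
  have m0: "m \<ge> 0" using rr pp m_def by simp
  have am: "Qc * rr + P * pp \<ge> 2 * S * m"
  proof -
    define a where "a = sqrt (Qc * rr)"
    define c where "c = sqrt (P * pp)"
    have "(a - c)\<^sup>2 \<ge> 0" by simp
    moreover have "a\<^sup>2 = Qc * rr" "c\<^sup>2 = P * pp" using a_def c_def Qc rr P pp by simp_all
    moreover have "a * c = S * m" unfolding a_def c_def S_def m_def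
      by (simp add: real_sqrt_mult[symmetric] algebra_simps)
    ultimately show ?thesis by (simp add: power2_eq_square algebra_simps)
  qed
  have rpm: "\<bar>rp\<bar> \<le> m"
  proof -
    have "sqrt (rp\<^sup>2) \<le> m" unfolding m_def using cs by (rule real_sqrt_le_mono)
    thus ?thesis by simp
  qed
  have S0: "S \<ge> 0" using P Qc S_def by simp
  have Sm: "S * \<bar>rp\<bar> \<le> S * m" using rpm S0 by (simp add: mult_left_mono)
  have Sr: "S * rp \<le> S * \<bar>rp\<bar>" using S0 by (simp add: mult_left_mono)
  have "2 * (S - 2 * t) * rp \<le> Qc * rr + P * pp - 4 * t * rp"
    using am Sm Sr by (simp add: algebra_simps)
  thus "Qc * rr + P * pp - 4 * t * rp \<ge> 2 * (sqrt (P * Qc) - 2 * t) * rp" using S_def by simp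
  show "Qc * rr + P * pp - 4 * t * rp \<ge> 0"
  proof (cases "rp \<ge> 0")
    case True
    hence "2 * (S - 2 * t) * rp \<ge> 0" using th S_def by simp
    moreover have "S * rp \<le> S * m" using Sm True by simp
    ultimately show ?thesis using am S_def by (simp add: algebra_simps)
  next
    case False
    have "S * \<bar>rp\<bar> \<ge> 0" using S0 by simp
    moreover have "t * rp \<le> 0" using False t by (simp add: mult_nonneg_nonpos)
    ultimately show ?thesis using am Sm by linarith
  qed
qed

text \<open>In the application (\<open>admm.first_step_bounds\<close>) \<open>a0\<close> and \<open>a1\<close> are the squared \<open>M\<close>-distances of
  \<open>z_0\<close> and \<open>z_1\<close> to a solution, expanded by the block structure of \<open>M\<close>, and \<open>X1\<close>, \<open>e1\<close> are
  \<open>step_sq 1\<close> and \<open>err_sq 1\<close>.\<close>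

lemma first_step_bounds_arith:
  fixes \<beta> \<tau> \<theta> st sh rr pp rp hy gx ex a0 a1 X1 e1 g0 h0 hyS1 W wR P00 P0p :: real
  assumes b: "\<beta> > 0" and tt: "\<tau> + \<theta> > 0"
    and H1: "a1 + X1 - e1 \<le> a0"
    and A1: "a1 \<ge> hyS1 + \<beta>*(1-\<tau>)*(P00 - 2*P0p + pp) + (W + 2*((\<tau>+\<theta>)*\<beta>)*wR + ((\<tau>+\<theta>)*\<beta>)\<^sup>2*rr) / ((\<tau>+\<theta>)*\<beta>)"
    and X1: "X1 = gx + hy + \<beta>*(1-\<tau>)*pp + \<beta>/(\<tau>+\<theta>)*(rr - 2*(1-\<tau>)*rp + (1-\<tau>)\<^sup>2*pp)"
    and e1: "e1 = ex + \<beta>/(\<tau>+\<theta>) * ((\<tau>+\<theta>-1)\<^sup>2*rr + 2*(\<tau>+\<theta>-1)*(1-\<tau>)*rp + (1-\<tau>)\<^sup>2*pp)"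
    and a0: "a0 = g0 + h0 + \<beta>*(1-\<tau>)*P00 + W / ((\<tau>+\<theta>)*\<beta>)"
    and ex: "ex \<le> st * \<beta> * (rr - 2 * rp + pp) + sh * gx" and sh: "sh \<le> 1" and gx: "gx \<ge> 0"
    and nn: "g0 \<ge> 0" "h0 \<ge> 0" "hyS1 \<ge> 0" "hy \<ge> 0" "rr \<ge> 0" "pp \<ge> 0" "rp\<^sup>2 \<le> rr * pp"
    and t1: "1 - \<tau> \<ge> 0"
    and Y1: "4*P00 - 4*P0p + pp \<ge> 0"
    and Y2: "4*W + 4*((\<tau>+\<theta>)*\<beta>)*wR + ((\<tau>+\<theta>)*\<beta>)\<^sup>2*rr \<ge> 0"
    and PQ: "3 - 3 * \<tau> - 2 * st > 0" "4 - \<tau> - \<theta> - 2 * st > 0" "1 - \<tau> - st \<ge> 0"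
    and vt: "vartheta st \<tau> \<theta> \<ge> 0"
  shows "\<beta> * vartheta st \<tau> \<theta> * rp \<le> 2 * a0"
    and "hy \<le> 2 * a0"
proof -
  define c1 where "c1 = 1 / (\<tau> + \<theta>)"
  define cb where "cb = 1 / \<beta>"
  have c1: "c1 * (\<tau> + \<theta>) = 1" using tt c1_def by simp
  have cb: "cb * \<beta> = 1" using b cb_def by simp
  have c0: "c1 > 0" "cb > 0" using tt b c1_def cb_def by simp_all
  have r1: "\<beta>/(\<tau>+\<theta>) = \<beta>*c1" using c1_def by simp
  have r2: "\<And>z. z / ((\<tau>+\<theta>)*\<beta>) = z * c1 * cb" using c1_def cb_def by simp
  define Qp where "Qp = (4 - \<tau> - \<theta> - 2 * st) * rr + (3 - 3 * \<tau> - 2 * st) * pp - 4 * (1 - \<tau> - st) * rp"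
  have iden: "2 * a0 - hy - (\<beta>/2) * Qp
     = (a0 - (a1 + X1 - e1)) + (a1 - (hyS1 + \<beta>*(1-\<tau>)*(P00 - 2*P0p + pp) + (W + 2*((\<tau>+\<theta>)*\<beta>)*wR + ((\<tau>+\<theta>)*\<beta>)\<^sup>2*rr) * c1 * cb))
       + hyS1 + (1 - sh) * gx + (st * \<beta> * (rr - 2 * rp + pp) + sh * gx - ex) + g0 + h0
       + (\<beta>*(1-\<tau>)/2) * (4*P00 - 4*P0p + pp) + (c1*cb/2) * (4*W + 4*((\<tau>+\<theta>)*\<beta>)*wR + ((\<tau>+\<theta>)*\<beta>)\<^sup>2*rr)"
    using c1 cb unfolding X1 e1 a0 r1 r2 Qp_def by algebra
  have T: "(a0 - (a1 + X1 - e1)) \<ge> 0" "(a1 - (hyS1 + \<beta>*(1-\<tau>)*(P00 - 2*P0p + pp) + (W + 2*((\<tau>+\<theta>)*\<beta>)*wR + ((\<tau>+\<theta>)*\<beta>)\<^sup>2*rr) * c1 * cb)) \<ge> 0"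
    "(1 - sh) * gx \<ge> 0" "st * \<beta> * (rr - 2 * rp + pp) + sh * gx - ex \<ge> 0"
    "(\<beta>*(1-\<tau>)/2) * (4*P00 - 4*P0p + pp) \<ge> 0" "(c1*cb/2) * (4*W + 4*((\<tau>+\<theta>)*\<beta>)*wR + ((\<tau>+\<theta>)*\<beta>)\<^sup>2*rr) \<ge> 0"
    using H1 A1 r2 sh gx ex b t1 Y1 Y2 c0 by simp_all
  have main: "hy + (\<beta>/2) * Qp \<le> 2 * a0" using iden T nn by linarith
  have Q1: "Qp \<ge> 2 * vartheta st \<tau> \<theta> * rp" and Q2: "Qp \<ge> 0"
    unfolding Qp_def vartheta_def
    using cross_term_lower_bounds[OF PQ(1) PQ(2) PQ(3) _ nn(7) nn(5) nn(6)] vt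
    by (simp_all add: vartheta_def mult.commute)
  have "(\<beta>/2) * (2 * vartheta st \<tau> \<theta> * rp) \<le> (\<beta>/2) * Qp"
    using Q1 b by (intro mult_left_mono) auto
  thus "\<beta> * vartheta st \<tau> \<theta> * rp \<le> 2 * a0" using main nn(4) by simp
  have "(\<beta>/2) * Qp \<ge> 0" using Q2 b by simp
  thus "hy \<le> 2 * a0" using main by simp
qed

lemma ergodic_constant_le:
  fixes \<sigma> D :: real
  assumes s: "0 \<le> \<sigma>" "\<sigma> < 1" and D: "D \<ge> 0"
  shows "D + 4 * (sqrt (D / (1 - \<sigma>)) + sqrt D) * sqrt D \<le> 3 * (3 - 2 * \<sigma>) * D / (1 - \<sigma>)"
proof -
  define r where "r = sqrt (1 - \<sigma>)"
  have r0: "r > 0" "r \<le> 1" using s r_def by auto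
  have r2: "r\<^sup>2 = 1 - \<sigma>" using s r_def by simp
  have e1: "sqrt (D / (1 - \<sigma>)) * sqrt D = D / r"
    using D s r_def by (simp add: real_sqrt_divide real_sqrt_mult[symmetric])
  have e2: "sqrt D * sqrt D = D" using D by simp
  have "D + 4 * (sqrt (D / (1 - \<sigma>)) + sqrt D) * sqrt D = D + 4 * (sqrt (D / (1 - \<sigma>)) * sqrt D) + 4 * (sqrt D * sqrt D)"
    by (simp add: algebra_simps)
  also have "\<dots> = D * (5 + 4 / r)" unfolding e1 e2 by (simp add: algebra_simps)
  finally have lhs: "D + 4 * (sqrt (D / (1 - \<sigma>)) + sqrt D) * sqrt D = D * (5 + 4 / r)" .
  have rhs: "3 * (3 - 2 * \<sigma>) * D / (1 - \<sigma>) = D * (3 * (1 + 2 * r\<^sup>2) / r\<^sup>2)"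
  proof -
    have sg: "\<sigma> = 1 - r\<^sup>2" using r2 by simp
    show ?thesis unfolding sg by (simp add: algebra_simps)
  qed
  have key: "5 + 4 / r \<le> 3 * (1 + 2 * r\<^sup>2) / r\<^sup>2"
  proof -
    have "(1 - r) * (3 - r) \<ge> 0" using r0 by simp
    hence "5 * r\<^sup>2 + 4 * r \<le> 3 * (1 + 2 * r\<^sup>2)" by (simp add: power2_eq_square algebra_simps)
    hence "(5 * r\<^sup>2 + 4 * r) / r\<^sup>2 \<le> 3 * (1 + 2 * r\<^sup>2) / r\<^sup>2" using r0 by (simp add: divide_right_mono)
    moreover have "(5 * r\<^sup>2 + 4 * r) / r\<^sup>2 = 5 + 4 / r" using r0 by (simp add: power2_eq_square field_simps)
    ultimately show ?thesis by simp
  qed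
  have "D * (5 + 4 / r) \<le> D * (3 * (1 + 2 * r\<^sup>2) / r\<^sup>2)" using key D by (rule mult_left_mono)
  thus ?thesis unfolding lhs rhs .
qed

lemma le_mult_Inf:
  fixes S :: "real set"
  assumes "S \<noteq> {}" "c \<ge> 0" "\<And>a. a \<in> S \<Longrightarrow> t \<le> c * a"
  shows "t \<le> c * Inf S"
proof (cases "c = 0")
  case True
  thus ?thesis using assms by auto
next
  case False
  hence "t / c \<le> Inf S" using assms by (intro cInf_greatest) (auto simp: divide_le_eq mult.commute)
  thus ?thesis using False assms(2) by (simp add: divide_le_eq mult.commute)
qed

section \<open>HPE-type iterations\<close>

text \<open>An inexact hybrid proximal extragradient method in the seminorm of \<open>M\<close>, with extragradient
  points \<open>zt i\<close>, observed from one fixed solution \<open>zs\<close>.\<close>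

locale hpe_iteration = psd_matrix M for M :: "real^'k^'k" +
  fixes z zt :: "nat \<Rightarrow> real^'k" and zs :: "real^'k" and \<eta> :: "nat \<Rightarrow> real" and \<sigma> :: real
  assumes sigma_nonneg: "0 \<le> \<sigma>" and sigma_less_1: "\<sigma> < 1"
    and eta_nonneg: "\<And>i. \<eta> i \<ge> 0"
    and step_monotone: "\<And>i. i \<ge> 1 \<Longrightarrow> inner (M *v (z (i - 1) - z i)) (zt i - zs) \<ge> 0"
    and rel_error: "\<And>i. i \<ge> 1 \<Longrightarrow>
      qnorm2 M (zt i - z i) \<le> \<sigma> * qnorm2 M (zt i - z (i - 1)) + \<eta> (i - 1) - \<eta> i"
begin

abbreviation "D0 \<equiv> qnorm2 M (zs - z 0) + \<eta> 0"

lemma D0_nonneg: "D0 \<ge> 0"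
  using qnorm2_nonneg[of "zs - z 0"] eta_nonneg[of 0] by simp

lemma Fejer_step:
  assumes "i \<ge> 1"
  shows "qnorm2 M (zs - z i) + \<eta> i + (1 - \<sigma>) * qnorm2 M (zt i - z (i - 1))
    \<le> qnorm2 M (zs - z (i - 1)) + \<eta> (i - 1)"
  using three_point_identity[of zs "z i" "z (i - 1)" "zt i"] step_monotone[OF assms] rel_error[OF assms]
  by (simp add: algebra_simps)

lemma Fejer_bound: "qnorm2 M (zs - z i) + \<eta> i \<le> D0"
proof (induction i)
  case (Suc i)
  have "(1 - \<sigma>) * qnorm2 M (zt (Suc i) - z i) \<ge> 0" using sigma_less_1 qnorm2_nonneg by simp
  with Fejer_step[of "Suc i"] Suc.IH show ?case by simp
qed simp

lemma dist_le_D0: "qnorm2 M (zs - z i) \<le> D0"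
  using Fejer_bound[of i] eta_nonneg[of i] by linarith

lemma error_le_D0: "i \<ge> 1 \<Longrightarrow> qnorm2 M (zt i - z i) \<le> D0 / (1 - \<sigma>)"
proof -
  assume i: "i \<ge> 1"
  have step: "(1 - \<sigma>) * qnorm2 M (zt i - z (i - 1)) \<le> D0"
    using Fejer_step[OF i] Fejer_bound[of "i - 1"] qnorm2_nonneg[of "zs - z i"] eta_nonneg[of i] by linarith
  have eta: "\<eta> (i - 1) \<le> D0"
    using Fejer_bound[of "i - 1"] qnorm2_nonneg[of "zs - z (i - 1)"] by linarith
  have "qnorm2 M (zt i - z i) \<le> \<sigma> * qnorm2 M (zt i - z (i - 1)) + \<eta> (i - 1)"
    using rel_error[OF i] eta_nonneg[of i] by linarith
  hence "(1 - \<sigma>) * qnorm2 M (zt i - z i)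
      \<le> (1 - \<sigma>) * (\<sigma> * qnorm2 M (zt i - z (i - 1)) + \<eta> (i - 1))"
    using sigma_less_1 by (intro mult_left_mono) auto
  also have "\<dots> = \<sigma> * ((1 - \<sigma>) * qnorm2 M (zt i - z (i - 1))) + (1 - \<sigma>) * \<eta> (i - 1)"
    by (simp add: algebra_simps)
  also have "\<dots> \<le> \<sigma> * D0 + (1 - \<sigma>) * D0"
    using step eta sigma_nonneg sigma_less_1 by (intro add_mono mult_left_mono) auto
  finally show ?thesis using sigma_less_1 by (simp add: field_simps)
qed

lemma residual_norm_le: "norm (M *v (z 0 - z k)) \<le> 2 * sqrt (lambda_max M * D0)"
proof -
  have "sqrt (qnorm2 M (z 0 - z k)) \<le> sqrt (qnorm2 M (z 0 - zs)) + sqrt (qnorm2 M (zs - z k))"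
    by (rule seminorm_triangle_diff)
  also have "\<dots> \<le> 2 * sqrt D0"
    using dist_le_D0[of 0] dist_le_D0[of k] qnorm2_minus_commute[of M "z 0" zs]
      real_sqrt_le_mono[of "qnorm2 M (z 0 - zs)" D0] real_sqrt_le_mono[of "qnorm2 M (zs - z k)" D0]
    by linarith
  finally have "(sqrt (qnorm2 M (z 0 - z k)))\<^sup>2 \<le> (2 * sqrt D0)\<^sup>2"
    using qnorm2_nonneg[of "z 0 - z k"] by (intro power_mono) auto
  hence "qnorm2 M (z 0 - z k) \<le> 4 * D0"
    using qnorm2_nonneg[of "z 0 - z k"] D0_nonneg by (simp add: power_mult_distrib)
  hence "(norm (M *v (z 0 - z k)))\<^sup>2 \<le> lambda_max M * (4 * D0)"
    using norm_mult_sq_le_lambda_max[of "z 0 - z k"] mult_left_mono[OF _ lambda_max_nonneg] by force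
  also have "\<dots> = (2 * sqrt (lambda_max M * D0))\<^sup>2"
    using lambda_max_nonneg D0_nonneg by (simp add: power_mult_distrib)
  finally show ?thesis
    by (rule power2_le_imp_le) (simp add: mult_nonneg_nonneg[OF lambda_max_nonneg D0_nonneg])
qed

lemma avg_dist_le:
  assumes k: "k \<ge> 1"
  shows "sqrt (qnorm2 M (avg k zt - zs)) \<le> sqrt (D0 / (1 - \<sigma>)) + sqrt D0"
proof -
  have "avg k zt - zs = avg k (\<lambda>i. zt i - zs)" by (simp add: avg_diff avg_const[OF k])
  moreover have "sqrt (qnorm2 M (zt i - zs)) \<le> sqrt (D0 / (1 - \<sigma>)) + sqrt D0" if "i \<ge> 1" for i
  proof -
    have "sqrt (qnorm2 M (zt i - zs)) \<le> sqrt (qnorm2 M (zt i - z i)) + sqrt (qnorm2 M (z i - zs))"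
      by (rule seminorm_triangle_diff)
    also have "\<dots> \<le> sqrt (D0 / (1 - \<sigma>)) + sqrt D0"
      using error_le_D0[OF that] dist_le_D0[of i] qnorm2_minus_commute[of M "z i" zs]
      by (intro add_mono real_sqrt_le_mono) auto
    finally show ?thesis .
  qed
  ultimately show ?thesis using seminorm_avg_le[OF k] by simp
qed

lemma sum_error_excess_le: "(\<Sum>i = 1..k. qnorm2 M (zt i - z i) - qnorm2 M (zt i - z (i - 1))) \<le> \<eta> 0"
proof -
  have "(\<Sum>i = 1..k. qnorm2 M (zt i - z i) - qnorm2 M (zt i - z (i - 1))) \<le> (\<Sum>i = 1..k. \<eta> (i - 1) - \<eta> i)"
  proof (rule sum_mono)
    fix i assume "i \<in> {1..k}"
    hence i: "i \<ge> 1" by simp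
    have "\<sigma> * qnorm2 M (zt i - z (i - 1)) \<le> qnorm2 M (zt i - z (i - 1))"
      using qnorm2_nonneg sigma_less_1 by (simp add: mult_left_le_one_le sigma_nonneg)
    thus "qnorm2 M (zt i - z i) - qnorm2 M (zt i - z (i - 1)) \<le> \<eta> (i - 1) - \<eta> i"
      using rel_error[OF i] by linarith
  qed
  also have "\<dots> = \<eta> 0 - \<eta> k" by (rule sum_pred_diff_telescope)
  finally show ?thesis using eta_nonneg[of k] by simp
qed

lemma dist_diff_le:
  assumes p: "sqrt (qnorm2 M (p - zs)) \<le> c"
  shows "qnorm2 M (p - z 0) - qnorm2 M (p - z k) \<le> qnorm2 M (zs - z 0) + 4 * c * sqrt D0"
proof -
  have c_nonneg: "c \<ge> 0" using p qnorm2_nonneg[of "p - zs"] by (meson order_trans real_sqrt_ge_zero)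
  \<comment> \<open>expand both squared distances around \<open>zs\<close> and bound the cross terms by Cauchy--Schwarz\<close>
  have expand: "qnorm2 M (p - z j)
      = qnorm2 M (p - zs) - 2 * inner (M *v (p - zs)) (z j - zs) + qnorm2 M (z j - zs)" for j
  proof -
    have "p - z j = (p - zs) - (z j - zs)" by simp
    thus ?thesis by (simp only: qnorm2_diff)
  qed
  have cross: "\<bar>inner (M *v (p - zs)) (z j - zs)\<bar> \<le> c * sqrt D0" for j
  proof -
    have "sqrt (qnorm2 M (z j - zs)) \<le> sqrt D0"
      using dist_le_D0[of j] qnorm2_minus_commute[of M "z j" zs] by simp
    hence "sqrt (qnorm2 M (p - zs)) * sqrt (qnorm2 M (z j - zs)) \<le> c * sqrt D0"
      using p c_nonneg qnorm2_nonneg[of "z j - zs"] by (intro mult_mono) auto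
    thus ?thesis using Cauchy_Schwarz_abs[of "p - zs" "z j - zs"] by linarith
  qed
  show ?thesis
    using expand[of 0] expand[of k] cross[of 0] cross[of k] qnorm2_nonneg[of "z k - zs"]
      qnorm2_minus_commute[of M "z 0" zs]
    unfolding abs_le_iff by linarith
qed

lemma ergodic_gap_le:
  assumes k: "k \<ge> 1"
  shows "(\<Sum>i = 1..k. inner (M *v (z (i - 1) - z i)) (zt i - avg k zt))
    \<le> 3 * (3 - 2 * \<sigma>) * D0 / (2 * (1 - \<sigma>))"
proof -
  define p where "p = avg k zt"
  define c where "c = sqrt (D0 / (1 - \<sigma>)) + sqrt D0"
  have "2 * (\<Sum>i = 1..k. inner (M *v (z (i - 1) - z i)) (zt i - p))
      = (\<Sum>i = 1..k. (qnorm2 M (p - z (i - 1)) - qnorm2 M (p - z i))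
          + (qnorm2 M (zt i - z i) - qnorm2 M (zt i - z (i - 1))))"
    unfolding sum_distrib_left
  proof (rule sum.cong)
    show "2 * inner (M *v (z (i - 1) - z i)) (zt i - p)
      = (qnorm2 M (p - z (i - 1)) - qnorm2 M (p - z i)) + (qnorm2 M (zt i - z i) - qnorm2 M (zt i - z (i - 1)))"
      for i using three_point_identity[of p "z i" "z (i - 1)" "zt i"] by linarith
  qed simp
  also have "\<dots> = (qnorm2 M (p - z 0) - qnorm2 M (p - z k))
      + (\<Sum>i = 1..k. qnorm2 M (zt i - z i) - qnorm2 M (zt i - z (i - 1)))"
    using sum_pred_diff_telescope[of "\<lambda>i. qnorm2 M (p - z i)" k] by (simp add: sum.distrib)
  also have "\<dots> \<le> (qnorm2 M (zs - z 0) + 4 * c * sqrt D0) + \<eta> 0"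
    using dist_diff_le[OF avg_dist_le[OF k]] sum_error_excess_le unfolding p_def c_def by (rule add_mono)
  also have "\<dots> \<le> 3 * (3 - 2 * \<sigma>) * D0 / (1 - \<sigma>)"
    using ergodic_constant_le[OF sigma_nonneg sigma_less_1 D0_nonneg] unfolding c_def by linarith
  finally show ?thesis unfolding p_def using sigma_less_1 by (simp add: field_simps)
qed

end

section \<open>The inexact symmetric proximal ADMM\<close>

locale admm =
  fixes f :: "real^'n \<Rightarrow> ereal" and g :: "real^'p \<Rightarrow> ereal"
    and A :: "real^'n^'m" and B :: "real^'p^'m" and b :: "real^'m"
    and G :: "real^'n^'n" and H :: "real^'p^'p"
    and \<beta> st sh \<tau> \<theta> \<sigma> :: real
    and x :: "nat \<Rightarrow> real^'n" and y :: "nat \<Rightarrow> real^'p" and \<gamma> :: "nat \<Rightarrow> real^'m"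
    and xt :: "nat \<Rightarrow> real^'n" and u :: "nat \<Rightarrow> real^'n"
    and \<gamma>t :: "nat \<Rightarrow> real^'m" and \<gamma>h :: "nat \<Rightarrow> real^'m"
    and v :: "nat \<Rightarrow> real^'p" and w :: "nat \<Rightarrow> real^'m"
  assumes f_pcc: "proper_closed_convex f" and g_pcc: "proper_closed_convex g"
    and beta_pos: "\<beta> > 0"
    and st_range: "0 \<le> st" "st < 1" and sh_range: "0 \<le> sh" "sh < 1"
    and G_pd: "sym_pd G" and H_psd: "sym_psd H"
    and tau_theta: "(\<tau>, \<theta>) \<in> region_R st"
    and gt_def: "\<And>i. i \<ge> 1 \<Longrightarrow> \<gamma>t i = \<gamma> (i - 1) - \<beta> *\<^sub>R (A *v xt i + B *v y (i - 1) - b)"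
    and u_incl: "\<And>i. i \<ge> 1 \<Longrightarrow> u i \<in> (\<lambda>s. s - transpose A *v \<gamma>t i) ` subdiff f (xt i)"
    and inexact: "\<And>i. i \<ge> 1 \<Longrightarrow>
        qnorm2 G (xt i - x (i - 1) + matrix_inv G *v u i)
          \<le> st / \<beta> * (norm (\<gamma>t i - \<gamma> (i - 1)))\<^sup>2 + sh * qnorm2 G (xt i - x (i - 1))"
    and gh_def: "\<And>i. i \<ge> 1 \<Longrightarrow> \<gamma>h i = \<gamma> (i - 1) - (\<tau> * \<beta>) *\<^sub>R (A *v xt i + B *v y (i - 1) - b)"
    and y_opt: "\<And>i y'. i \<ge> 1 \<Longrightarrow>
        g (y i) - ereal (inner (\<gamma>h i) (B *v y i))
          + ereal (\<beta> / 2 * (norm (A *v xt i + B *v y i - b))\<^sup>2 + 1 / 2 * qnorm2 H (y i - y (i - 1)))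
        \<le> g y' - ereal (inner (\<gamma>h i) (B *v y'))
          + ereal (\<beta> / 2 * (norm (A *v xt i + B *v y' - b))\<^sup>2 + 1 / 2 * qnorm2 H (y' - y (i - 1)))"
    and x_upd: "\<And>i. i \<ge> 1 \<Longrightarrow> x i = x (i - 1) - matrix_inv G *v u i"
    and g_upd: "\<And>i. i \<ge> 1 \<Longrightarrow> \<gamma> i = \<gamma>h i - (\<theta> * \<beta>) *\<^sub>R (A *v xt i + B *v y i - b)"
    and v_def: "\<And>i. v i = (H + (((\<tau> - \<tau> * \<theta> + \<theta>) * \<beta>) / (\<tau> + \<theta>)) *\<^sub>R (transpose B ** B)) *v (y (i - 1) - y i)
                       - (\<tau> / (\<tau> + \<theta>)) *\<^sub>R (transpose B *v (\<gamma> (i - 1) - \<gamma> i))"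
    and w_def: "\<And>i. w i = - ((\<tau> / (\<tau> + \<theta>)) *\<^sub>R (B *v (y (i - 1) - y i)))
                       + (1 / ((\<tau> + \<theta>) * \<beta>)) *\<^sub>R (\<gamma> (i - 1) - \<gamma> i)"
    and sigma_range: "sh \<le> \<sigma>" "\<sigma> < 1"
    and phi_conds: "phi st \<tau> \<theta> \<sigma> \<ge> 0" "phi_hat st \<tau> \<theta> \<sigma> \<ge> 0"
                   "phi_tilde st \<tau> \<theta> \<sigma> > 0" "phi_bar st \<tau> \<theta> \<sigma> \<ge> 0"
begin

abbreviation "MM \<equiv> Mmat G H B \<beta> \<tau> \<theta>"

definition "Z i = blk3 (x i) (y i) (\<gamma> i)"
definition "Zt i = blk3 (xt i) (y i) (\<gamma>t i)"
definition "res i = A *v xt i + B *v y i - b"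
definition "dBy i = B *v (y i - y (i - 1))"

lemma tau_theta_bounds: "\<tau> + \<theta> > 0" "1 - \<tau> > 0" "1 + \<tau> > 0" "1 - \<tau> - st > 0"
  using tau_theta st_range unfolding region_R_def by auto

lemma sigma_nonneg: "\<sigma> \<ge> 0"
  using sigma_range sh_range by linarith

sublocale G: psd_matrix G
proof
  show "transpose G = G" using G_pd unfolding sym_pd_def by simp
  show "qnorm2 G z \<ge> 0" for z
    using G_pd unfolding sym_pd_def qnorm2_def by (cases "z = 0") (auto intro: less_imp_le)
qed

sublocale H: psd_matrix H
  using H_psd by unfold_locales (auto simp: sym_psd_def qnorm2_def)

text \<open>Completing the square in the multiplier block; since \<open>\<tau> < 1\<close> this exhibits \<open>M\<close> as positive
  semidefinite.\<close>

lemma qnorm2_MM: "qnorm2 MM (blk3 x' y' g') = qnorm2 G x' + qnorm2 H y' + \<beta> * (1 - \<tau>) * (norm (B *v y'))\<^sup>2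
     + (norm (g' - (\<tau> * \<beta>) *\<^sub>R (B *v y')))\<^sup>2 / ((\<tau> + \<theta>) * \<beta>)"
proof -
  have tt: "\<tau> + \<theta> \<noteq> 0" and bb: "\<beta> \<noteq> 0" using tau_theta_bounds beta_pos by auto
  define N I W where "N = (norm (B *v y'))\<^sup>2" and "I = inner g' (B *v y')" and "W = (norm g')\<^sup>2"
  have "inner ((transpose B ** B) *v y') y' = N"
    using inner_matrix_vector_transpose[of "transpose B" "B *v y'" y'] unfolding N_def
    by (simp add: matrix_vector_mul_assoc[symmetric] power2_norm_eq_inner)
  moreover have "inner (transpose B *v g') y' = I"
    using inner_matrix_vector_transpose[of "transpose B" g' y'] unfolding I_def by simp
  ultimately have lhs: "qnorm2 MM (blk3 x' y' g') = qnorm2 G x' + qnorm2 H y'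
      + ((\<tau> - \<tau> * \<theta> + \<theta>) * \<beta> / (\<tau> + \<theta>)) * N - 2 * (\<tau> / (\<tau> + \<theta>)) * I + (1 / ((\<tau> + \<theta>) * \<beta>)) * W"
    unfolding qnorm2_def Mmat_mult_blk3 inner_blk3 N_def I_def W_def
    by (simp add: matrix_vector_mult_add_rdistrib scaleR_matrix_vector_assoc[symmetric] inner_add_left
        inner_diff_left power2_norm_eq_inner inner_commute[of "B *v y'" g'] algebra_simps)
  have rhs: "(norm (g' - (\<tau> * \<beta>) *\<^sub>R (B *v y')))\<^sup>2 = W - 2 * (\<tau> * \<beta>) * I + (\<tau> * \<beta>)\<^sup>2 * N"
    using norm_scaleR_add_sq[of 1 g' "- (\<tau> * \<beta>)" "B *v y'"] unfolding N_def I_def W_def by simp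
  have c1: "(W - 2 * (\<tau> * \<beta>) * I + (\<tau> * \<beta>)\<^sup>2 * N) / ((\<tau> + \<theta>) * \<beta>)
      = (1 / ((\<tau> + \<theta>) * \<beta>)) * W - 2 * (\<tau> / (\<tau> + \<theta>)) * I + (\<tau>\<^sup>2 * \<beta> / (\<tau> + \<theta>)) * N"
    using tt bb by (simp add: diff_divide_distrib add_divide_distrib power2_eq_square)
  have c2: "(\<tau> - \<tau> * \<theta> + \<theta>) * \<beta> / (\<tau> + \<theta>) = \<beta> * (1 - \<tau>) + \<tau>\<^sup>2 * \<beta> / (\<tau> + \<theta>)"
    using tt by (simp add: field_simps power2_eq_square)
  show ?thesis unfolding lhs rhs c1 c2 N_def[symmetric] by (simp add: algebra_simps)
qed

sublocale M: psd_matrix MM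
proof
  show "transpose MM = MM"
    unfolding Mmat_def blkmat3_def
    using G.symmetric H.symmetric matrix_transpose_mul[of "transpose B" B]
    by (auto simp: vec_eq_iff transpose_def mat_def split: sum.split)
  show "qnorm2 MM z \<ge> 0" for z
  proof -
    obtain x' y' g' where z: "z = blk3 x' y' g'" by (rule blk3_cases)
    show ?thesis
      unfolding z qnorm2_MM using tau_theta_bounds beta_pos G.qnorm2_nonneg[of x'] H.qnorm2_nonneg[of y']
      by (intro add_nonneg_nonneg mult_nonneg_nonneg divide_nonneg_pos) auto
  qed
qed

lemma res_prev: "A *v xt i + B *v y (i - 1) - b = res i - dBy i"
  unfolding res_def dBy_def by (simp add: matrix_vector_mult_diff_distrib algebra_simps)

lemma gamma_tilde_eq: "i \<ge> 1 \<Longrightarrow> \<gamma>t i = \<gamma> (i - 1) - \<beta> *\<^sub>R (res i - dBy i)"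
  using gt_def res_prev by simp

lemma gamma_half_eq: "i \<ge> 1 \<Longrightarrow> \<gamma>h i = \<gamma> (i - 1) - (\<tau> * \<beta>) *\<^sub>R (res i - dBy i)"
  using gh_def res_prev by simp

lemma gamma_eq: "i \<ge> 1 \<Longrightarrow> \<gamma> i = \<gamma> (i - 1) - (\<tau> * \<beta>) *\<^sub>R (res i - dBy i) - (\<theta> * \<beta>) *\<^sub>R res i"
  using g_upd gamma_half_eq unfolding res_def by simp

lemma gamma_diff_eq: "i \<ge> 1 \<Longrightarrow> \<gamma> (i - 1) - \<gamma> i = ((\<tau> + \<theta>) * \<beta>) *\<^sub>R res i - (\<tau> * \<beta>) *\<^sub>R dBy i"
  using gamma_eq by (simp add: algebra_simps)

lemma B_mult_y_diff: "B *v (y (i - 1) - y i) = - dBy i"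
  unfolding dBy_def by (simp add: matrix_vector_mult_diff_distrib)

lemma w_eq_res: "i \<ge> 1 \<Longrightarrow> w i = res i"
proof -
  assume i: "i \<ge> 1"
  define a c where "a = \<tau> / (\<tau> + \<theta>)" and "c = 1 / ((\<tau> + \<theta>) * \<beta>)"
  have "w i = (a - c * (\<tau> * \<beta>)) *\<^sub>R dBy i + (c * ((\<tau> + \<theta>) * \<beta>)) *\<^sub>R res i"
    unfolding w_def a_def[symmetric] c_def[symmetric] B_mult_y_diff gamma_diff_eq[OF i]
    by (simp add: algebra_simps)
  moreover have "a - c * (\<tau> * \<beta>) = 0" "c * ((\<tau> + \<theta>) * \<beta>) = 1"
    unfolding a_def c_def using tau_theta_bounds beta_pos by auto
  ultimately show ?thesis by simp
qed

lemma MM_mult_step: "i \<ge> 1 \<Longrightarrow> MM *v (Z (i - 1) - Z i) = blk3 (u i) (v i) (w i)"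
proof -
  assume i: "i \<ge> 1"
  have "G *v (x (i - 1) - x i) = u i" using x_upd[OF i] sym_pd_mult_matrix_inv[OF G_pd] by simp
  thus ?thesis unfolding Z_def blk3_diff Mmat_mult_blk3 v_def w_def by simp
qed

lemma f_proper_convex: "proper_fun f" "convex_fun f"
  using f_pcc unfolding proper_closed_convex_def by auto

lemma g_proper_convex: "proper_fun g" "convex_fun g"
  using g_pcc unfolding proper_closed_convex_def by auto

lemma subgrad_f: "i \<ge> 1 \<Longrightarrow> u i + transpose A *v \<gamma>t i \<in> subdiff f (xt i)"
  using u_incl[of i] by (auto simp: image_iff)

definition "gsub i = transpose B *v (\<gamma>h i - \<beta> *\<^sub>R res i) - H *v (y i - y (i - 1))"

text \<open>The optimality condition of the \<open>y\<close>-subproblem.\<close>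

lemma subgrad_g: "i \<ge> 1 \<Longrightarrow> gsub i \<in> subdiff g (y i)"
proof -
  assume i: "i \<ge> 1"
  define q where "q y' = \<beta> / 2 * (norm (A *v xt i + B *v y' - b))\<^sup>2 + 1 / 2 * qnorm2 H (y' - y (i - 1))
                         - inner (\<gamma>h i) (B *v y')" for y'
  define dq where "dq = \<beta> *\<^sub>R (transpose B *v res i) + H *v (y i - y (i - 1)) - transpose B *v \<gamma>h i"
  define cq where "cq y' = \<beta> / 2 * (norm (B *v (y' - y i)))\<^sup>2 + 1 / 2 * qnorm2 H (y' - y i)" for y'
  have opt: "g (y i) + ereal (q (y i)) \<le> g y' + ereal (q y')" for y'
    using y_opt[OF i, of y'] unfolding q_def ereal_diff_add_eq by simp
  have expand: "q (y i + t *\<^sub>R (y' - y i)) = q (y i) + t * inner dq (y' - y i) + t\<^sup>2 * cq y'" for y' t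
  proof -
    define d where "d = y' - y i"
    have e1: "A *v xt i + B *v (y i + t *\<^sub>R d) - b = 1 *\<^sub>R res i + t *\<^sub>R (B *v d)"
      unfolding res_def by (simp add: matrix_vector_right_distrib matrix_vector_mult_scaleR algebra_simps)
    have e2: "qnorm2 H (y i + t *\<^sub>R d - y (i - 1))
        = qnorm2 H (y i - y (i - 1)) + 2 * t * inner (H *v (y i - y (i - 1))) d + t\<^sup>2 * qnorm2 H d"
      using H.qnorm2_add[of "y i - y (i - 1)" "t *\<^sub>R d"]
      by (simp add: qnorm2_scaleR matrix_vector_mult_scaleR algebra_simps)
    have e3: "inner (\<gamma>h i) (B *v (y i + t *\<^sub>R d)) = inner (\<gamma>h i) (B *v y i) + t * inner (\<gamma>h i) (B *v d)"
      by (simp add: matrix_vector_right_distrib matrix_vector_mult_scaleR inner_add_right)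
    have e4: "inner dq d = \<beta> * inner (res i) (B *v d) + inner (H *v (y i - y (i - 1))) d - inner (\<gamma>h i) (B *v d)"
      unfolding dq_def
      using inner_matrix_vector_transpose[of B d "res i"] inner_matrix_vector_transpose[of B d "\<gamma>h i"]
      by (simp add: inner_add_left inner_diff_left inner_add_right inner_diff_right inner_commute)
    have "q (y i + t *\<^sub>R d)
        = \<beta> / 2 * ((norm (res i))\<^sup>2 + 2 * t * inner (res i) (B *v d) + t\<^sup>2 * (norm (B *v d))\<^sup>2)
        + 1 / 2 * (qnorm2 H (y i - y (i - 1)) + 2 * t * inner (H *v (y i - y (i - 1))) d + t\<^sup>2 * qnorm2 H d)
        - (inner (\<gamma>h i) (B *v y i) + t * inner (\<gamma>h i) (B *v d))"
      unfolding q_def e1 e2 e3 norm_scaleR_add_sq by simp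
    also have "\<dots> = q (y i) + t * inner dq d + t\<^sup>2 * cq y'"
      unfolding e4 by (simp add: q_def cq_def d_def[symmetric] res_def algebra_simps)
    finally show ?thesis unfolding d_def .
  qed
  have "- dq \<in> subdiff g (y i)"
    by (rule minimizer_neg_gradient_subdiff[OF g_proper_convex opt expand])
  moreover have "- dq = gsub i" unfolding dq_def gsub_def
    by (simp add: matrix_vector_mult_diff_distrib matrix_vector_mult_scaleR algebra_simps)
  ultimately show ?thesis by simp
qed

lemma v_eq_gsub: "i \<ge> 1 \<Longrightarrow> v i + transpose B *v \<gamma>t i = gsub i"
proof -
  assume i: "i \<ge> 1"
  define a where "a = \<tau> / (\<tau> + \<theta>)"
  define c where "c = ((\<tau> - \<tau> * \<theta> + \<theta>) * \<beta>) / (\<tau> + \<theta>)"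
  have tt: "\<tau> + \<theta> \<noteq> 0" using tau_theta_bounds by simp
  have "v i + transpose B *v \<gamma>t i = transpose B *v (\<gamma> (i - 1) + (- (a * ((\<tau> + \<theta>) * \<beta>)) - \<beta>) *\<^sub>R res i
        + (a * (\<tau> * \<beta>) + \<beta> - c) *\<^sub>R dBy i) - H *v (y i - y (i - 1))"
    unfolding v_def a_def[symmetric] c_def[symmetric] gamma_diff_eq[OF i] gamma_tilde_eq[OF i]
      matrix_vector_mult_add_rdistrib scaleR_matrix_vector_assoc[symmetric]
      matrix_vector_mul_assoc[symmetric] B_mult_y_diff
    by (simp add: matrix_vector_right_distrib matrix_vector_mult_diff_distrib matrix_vector_mult_scaleR
        matrix_vector_mult_uminus_right algebra_simps)
  also have "\<dots> = gsub i"
  proof -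
    have c1: "a * ((\<tau> + \<theta>) * \<beta>) = \<tau> * \<beta>" unfolding a_def using tt by simp
    have "a * (\<tau> * \<beta>) + \<beta> - c
        = (\<tau> * (\<tau> * \<beta>) + \<beta> * (\<tau> + \<theta>) - (\<tau> - \<tau> * \<theta> + \<theta>) * \<beta>) / (\<tau> + \<theta>)"
      unfolding a_def c_def using tt by (simp add: add_divide_distrib diff_divide_distrib)
    also have "\<tau> * (\<tau> * \<beta>) + \<beta> * (\<tau> + \<theta>) - (\<tau> - \<tau> * \<theta> + \<theta>) * \<beta> = (\<tau> * \<beta>) * (\<tau> + \<theta>)"
      by (simp add: algebra_simps)
    finally have c2: "a * (\<tau> * \<beta>) + \<beta> - c = \<tau> * \<beta>" using tt by simp
    show ?thesis unfolding c1 c2 gsub_def gamma_half_eq[OF i] by (simp add: algebra_simps)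
  qed
  finally show ?thesis .
qed

definition "lagrangian_sol xs ys gs \<longleftrightarrow>
  0 \<in> (\<lambda>s. s - transpose A *v gs) ` subdiff f xs \<and> 0 \<in> (\<lambda>s. s - transpose B *v gs) ` subdiff g ys
  \<and> A *v xs + B *v ys - b = 0"

text \<open>Monotonicity of the KKT operator, with \<open>(u i, v i, w i)\<close> as residual at \<open>Zt i\<close>.\<close>

lemma step_monotone_sol:
  assumes sol: "lagrangian_sol xs ys gs" and i: "i \<ge> 1"
  shows "inner (MM *v (Z (i - 1) - Z i)) (Zt i - blk3 xs ys gs) \<ge> 0"
proof -
  have f: "transpose A *v gs \<in> subdiff f xs" and g: "transpose B *v gs \<in> subdiff g ys"
    and feas: "A *v xs + B *v ys - b = 0"
    using sol unfolding lagrangian_sol_def zero_in_shifted_image_iff by auto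
  have "inner (u i + transpose A *v \<gamma>t i - transpose A *v gs) (xt i - xs) \<ge> 0"
    by (rule subdiff_monotone[OF f_proper_convex(1) subgrad_f[OF i] f])
  moreover have "inner (v i + transpose B *v \<gamma>t i - transpose B *v gs) (y i - ys) \<ge> 0"
    using subdiff_monotone[OF g_proper_convex(1) subgrad_g[OF i] g] v_eq_gsub[OF i] by simp
  moreover have "inner (MM *v (Z (i - 1) - Z i)) (Zt i - blk3 xs ys gs)
      = inner (u i + transpose A *v \<gamma>t i - transpose A *v gs) (xt i - xs)
        + inner (v i + transpose B *v \<gamma>t i - transpose B *v gs) (y i - ys)"
  proof -
    have "A *v (xt i - xs) + B *v (y i - ys) = w i"
      using feas w_eq_res[OF i] unfolding res_def by (simp add: matrix_vector_mult_diff_distrib algebra_simps)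
    hence w: "inner (w i) (\<gamma>t i - gs) = inner (\<gamma>t i - gs) (A *v (xt i - xs)) + inner (\<gamma>t i - gs) (B *v (y i - ys))"
      by (metis inner_add_right inner_commute)
    have "inner (transpose A *v (\<gamma>t i - gs)) (xt i - xs) = inner (\<gamma>t i - gs) (A *v (xt i - xs))"
      "inner (transpose B *v (\<gamma>t i - gs)) (y i - ys) = inner (\<gamma>t i - gs) (B *v (y i - ys))"
      using inner_matrix_vector_transpose[of "transpose A" "\<gamma>t i - gs" "xt i - xs"]
        inner_matrix_vector_transpose[of "transpose B" "\<gamma>t i - gs" "y i - ys"] by simp_all
    thus ?thesis
      unfolding MM_mult_step[OF i] Zt_def blk3_diff inner_blk3 w
      by (simp add: inner_add_left inner_diff_left matrix_vector_mult_diff_distrib)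
  qed
  ultimately show ?thesis by linarith
qed

text \<open>\<open>eta\<close> is the potential of the HPE framework; the other quantities are the squared terms of
  the relative-error inequality.\<close>

definition "err_sq i = qnorm2 MM (Zt i - Z i)"
definition "step_sq i = qnorm2 MM (Zt i - Z (i - 1))"
definition "rr i = (norm (res i))\<^sup>2"
definition "pp i = (norm (dBy i))\<^sup>2"
definition "rp i = inner (res i) (dBy i)"
definition "hy i = qnorm2 H (y i - y (i - 1))"
definition "gx i = qnorm2 G (xt i - x (i - 1))"
definition "ex i = qnorm2 G (xt i - x i)"
definition "eta i = \<beta> / (\<tau> + \<theta>) * (phi_tilde st \<tau> \<theta> \<sigma> * rr i + phi st \<tau> \<theta> \<sigma> / ((1 + \<tau>) * \<beta>) * hy i)"

lemma squares_nonneg: "rr i \<ge> 0" "pp i \<ge> 0" "hy i \<ge> 0" "gx i \<ge> 0"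
  unfolding rr_def pp_def hy_def gx_def using H.qnorm2_nonneg G.qnorm2_nonneg by auto

lemma rp_sq_le: "(rp i)\<^sup>2 \<le> rr i * pp i"
  unfolding rp_def rr_def pp_def by (rule inner_sq_le_norm_sq)

lemma eta_nonneg: "eta i \<ge> 0"
  unfolding eta_def using phi_conds(1,3) tau_theta_bounds beta_pos squares_nonneg by simp

lemma norm_sq_combination: "(norm (a *\<^sub>R res i + c *\<^sub>R dBy i))\<^sup>2 = a\<^sup>2 * rr i + 2 * a * c * rp i + c\<^sup>2 * pp i"
  unfolding rr_def pp_def rp_def by (rule norm_scaleR_add_sq)

lemma err_sq_eq:
  assumes i: "i \<ge> 1"
  shows "err_sq i = ex i + \<beta> / (\<tau> + \<theta>) * ((\<tau> + \<theta> - 1)\<^sup>2 * rr i + 2 * (\<tau> + \<theta> - 1) * (1 - \<tau>) * rp i + (1 - \<tau>)\<^sup>2 * pp i)"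
proof -
  have gamma: "\<gamma>t i - \<gamma> i = ((\<tau> + \<theta> - 1) * \<beta>) *\<^sub>R res i + ((1 - \<tau>) * \<beta>) *\<^sub>R dBy i"
    unfolding gamma_tilde_eq[OF i] gamma_eq[OF i] by (simp add: algebra_simps)
  have "err_sq i = ex i + (norm (\<gamma>t i - \<gamma> i))\<^sup>2 / ((\<tau> + \<theta>) * \<beta>)"
    unfolding err_sq_def Zt_def Z_def blk3_diff qnorm2_MM ex_def by (simp add: qnorm2_def)
  also have "(norm (\<gamma>t i - \<gamma> i))\<^sup>2
      = \<beta>\<^sup>2 * ((\<tau> + \<theta> - 1)\<^sup>2 * rr i + 2 * (\<tau> + \<theta> - 1) * (1 - \<tau>) * rp i + (1 - \<tau>)\<^sup>2 * pp i)"
    unfolding gamma norm_sq_combination by (simp add: power2_eq_square algebra_simps)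
  finally show ?thesis using beta_pos by (simp add: power2_eq_square)
qed

lemma step_sq_eq:
  assumes i: "i \<ge> 1"
  shows "step_sq i = gx i + hy i + \<beta> * (1 - \<tau>) * pp i
    + \<beta> / (\<tau> + \<theta>) * (rr i - 2 * (1 - \<tau>) * rp i + (1 - \<tau>)\<^sup>2 * pp i)"
proof -
  have gamma: "\<gamma>t i - \<gamma> (i - 1) - (\<tau> * \<beta>) *\<^sub>R dBy i = (- \<beta>) *\<^sub>R res i + ((1 - \<tau>) * \<beta>) *\<^sub>R dBy i"
    unfolding gamma_tilde_eq[OF i] by (simp add: algebra_simps)
  have "step_sq i = gx i + hy i + \<beta> * (1 - \<tau>) * pp i
      + (norm (\<gamma>t i - \<gamma> (i - 1) - (\<tau> * \<beta>) *\<^sub>R dBy i))\<^sup>2 / ((\<tau> + \<theta>) * \<beta>)"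
    unfolding step_sq_def Zt_def Z_def blk3_diff qnorm2_MM gx_def hy_def pp_def dBy_def by simp
  also have "(norm (\<gamma>t i - \<gamma> (i - 1) - (\<tau> * \<beta>) *\<^sub>R dBy i))\<^sup>2
      = \<beta>\<^sup>2 * (rr i - 2 * (1 - \<tau>) * rp i + (1 - \<tau>)\<^sup>2 * pp i)"
    unfolding gamma norm_sq_combination by (simp add: power2_eq_square algebra_simps)
  finally show ?thesis using beta_pos by (simp add: power2_eq_square)
qed

lemma ex_le:
  assumes i: "i \<ge> 1"
  shows "ex i \<le> st * \<beta> * (rr i - 2 * rp i + pp i) + sh * gx i"
proof -
  have gamma: "\<gamma>t i - \<gamma> (i - 1) = (- \<beta>) *\<^sub>R res i + \<beta> *\<^sub>R dBy i"
    unfolding gamma_tilde_eq[OF i] by (simp add: algebra_simps)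
  have xe: "xt i - x (i - 1) + matrix_inv G *v u i = xt i - x i" using x_upd[OF i] by simp
  have "(norm (\<gamma>t i - \<gamma> (i - 1)))\<^sup>2 = \<beta>\<^sup>2 * (rr i - 2 * rp i + pp i)"
    unfolding gamma norm_sq_combination by (simp add: power2_eq_square algebra_simps)
  hence "st / \<beta> * (norm (\<gamma>t i - \<gamma> (i - 1)))\<^sup>2 = st * \<beta> * (rr i - 2 * rp i + pp i)"
    using beta_pos by (simp add: power2_eq_square)
  moreover have "qnorm2 G (xt i - x i)
      \<le> st / \<beta> * (norm (\<gamma>t i - \<gamma> (i - 1)))\<^sup>2 + sh * qnorm2 G (xt i - x (i - 1))"
    using inexact[OF i] unfolding xe .
  ultimately show ?thesis unfolding ex_def gx_def by simp
qed

lemma gsub_monotone_step: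
  assumes i: "i \<ge> 2"
  shows "(1 - \<theta>) * \<beta> * inner (res (i - 1)) (dBy i) - (1 + \<tau>) * \<beta> * rp i + \<tau> * \<beta> * pp i - hy i
    + inner (H *v (y (i - 1) - y (i - 1 - 1))) (y i - y (i - 1)) \<ge> 0"
proof -
  have i1: "i \<ge> 1" "i - 1 \<ge> 1" using i by auto
  have mono: "inner (gsub i - gsub (i - 1)) (y i - y (i - 1)) \<ge> 0"
    by (rule subdiff_monotone[OF g_proper_convex(1) subgrad_g[OF i1(1)] subgrad_g[OF i1(2)]])
  have "\<gamma> (i - 1) = \<gamma>h (i - 1) - (\<theta> * \<beta>) *\<^sub>R res (i - 1)" using g_upd[OF i1(2)] unfolding res_def .
  hence "\<gamma>h i = \<gamma>h (i - 1) - (\<theta> * \<beta>) *\<^sub>R res (i - 1) - (\<tau> * \<beta>) *\<^sub>R (res i - dBy i)"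
    using gamma_half_eq[OF i1(1)] by simp
  hence gamma: "\<gamma>h i - \<beta> *\<^sub>R res i - (\<gamma>h (i - 1) - \<beta> *\<^sub>R res (i - 1))
      = ((1 - \<theta>) * \<beta>) *\<^sub>R res (i - 1) - ((1 + \<tau>) * \<beta>) *\<^sub>R res i + (\<tau> * \<beta>) *\<^sub>R dBy i"
    by (simp add: algebra_simps)
  define X where "X = \<gamma>h i - \<beta> *\<^sub>R res i - (\<gamma>h (i - 1) - \<beta> *\<^sub>R res (i - 1))"
  have "gsub i - gsub (i - 1)
      = transpose B *v X - (H *v (y i - y (i - 1)) - H *v (y (i - 1) - y (i - 1 - 1)))"
    unfolding gsub_def X_def by (simp add: matrix_vector_mult_diff_distrib algebra_simps)
  moreover have "inner (transpose B *v X) (y i - y (i - 1)) = inner X (dBy i)"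
    unfolding dBy_def using inner_matrix_vector_transpose[of "transpose B" X "y i - y (i - 1)"] by simp
  ultimately have "inner (gsub i - gsub (i - 1)) (y i - y (i - 1)) = inner X (dBy i) - hy i
      + inner (H *v (y (i - 1) - y (i - 1 - 1))) (y i - y (i - 1))"
    unfolding hy_def qnorm2_def by (simp add: inner_diff_left)
  also have "inner X (dBy i) = (1 - \<theta>) * \<beta> * inner (res (i - 1)) (dBy i) - (1 + \<tau>) * \<beta> * rp i + \<tau> * \<beta> * pp i"
    unfolding X_def gamma rp_def pp_def by (simp add: inner_diff_left inner_add_left power2_norm_eq_inner)
  finally show ?thesis using mono by simp
qed

lemma H_cross_le: "2 * inner (H *v (y (i - 1) - y (i - 1 - 1))) (y i - y (i - 1)) \<le> hy i + hy (i - 1)"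
  using H.qnorm2_nonneg[of "(y (i - 1) - y (i - 1 - 1)) - (y i - y (i - 1))"]
  unfolding H.qnorm2_diff hy_def by simp

lemma rel_error_step:
  assumes i: "i \<ge> 2"
  shows "err_sq i \<le> \<sigma> * step_sq i + eta (i - 1) - eta i"
proof -
  have i1: "i \<ge> 1" using i by simp
  have cs: "(inner (res (i - 1)) (dBy i))\<^sup>2 \<le> rr (i - 1) * pp i"
    unfolding rr_def pp_def by (rule inner_sq_le_norm_sq)
  have "err_sq i \<le> \<sigma> * step_sq i
      + \<beta> / (\<tau> + \<theta>) * (phi_tilde st \<tau> \<theta> \<sigma> * rr (i - 1) + phi st \<tau> \<theta> \<sigma> / ((1 + \<tau>) * \<beta>) * hy (i - 1))
      - \<beta> / (\<tau> + \<theta>) * (phi_tilde st \<tau> \<theta> \<sigma> * rr i + phi st \<tau> \<theta> \<sigma> / ((1 + \<tau>) * \<beta>) * hy i)"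
    unfolding err_sq_eq[OF i1] step_sq_eq[OF i1]
    using rel_error_step_arith[OF beta_pos tau_theta_bounds(1) tau_theta_bounds(3) ex_le[OF i1] sigma_range(1)
        squares_nonneg(4) squares_nonneg(3) gsub_monotone_step[OF i] H_cross_le cs
        squares_nonneg(1) squares_nonneg(2) sigma_nonneg phi_conds(1) phi_conds(3) phi_conds(4)]
    by (simp add: algebra_simps)
  thus ?thesis unfolding eta_def .
qed

definition "C2 = 1 + 4 * (1 + \<tau> + vartheta st \<tau> \<theta>) * phi st \<tau> \<theta> \<sigma> / ((\<tau> + \<theta>) * (1 + \<tau>) * vartheta st \<tau> \<theta>)"

definition "C3 = (3 - 2 * \<sigma>) * C2 / (1 - \<sigma>)"

lemma C2_ge_1: "C2 \<ge> 1"
  unfolding C2_def using region_R_vartheta_pos(1)[OF st_range tau_theta] tau_theta_bounds phi_conds(1) by simp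

text \<open>The first iteration has no predecessor; instead, the distance of \<open>Z 1\<close> to a solution bounds
  the cross term \<open>rp 1\<close> and \<open>hy 1\<close>.\<close>

lemma first_step_bounds:
  assumes sol: "lagrangian_sol xs ys gs"
  defines "a0 \<equiv> qnorm2 MM (blk3 xs ys gs - Z 0)"
  shows "\<beta> * vartheta st \<tau> \<theta> * rp 1 \<le> 2 * a0" and "hy 1 \<le> 2 * a0"
proof -
  define a1 where "a1 = qnorm2 MM (blk3 xs ys gs - Z 1)"
  define P0 where "P0 = B *v (ys - y 0)"
  define \<omega> where "\<omega> = (gs - \<gamma> 0) - (\<tau> * \<beta>) *\<^sub>R P0"
  have lyapunov: "a1 + step_sq 1 - err_sq 1 \<le> a0"
    using M.three_point_identity[of "blk3 xs ys gs" "Z 1" "Z 0" "Zt 1"] step_monotone_sol[OF sol, of 1]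
    unfolding a1_def a0_def step_sq_def err_sq_def by simp
  have a0_eq: "a0 = qnorm2 G (xs - x 0) + qnorm2 H (ys - y 0) + \<beta> * (1 - \<tau>) * (norm P0)\<^sup>2
      + (norm \<omega>)\<^sup>2 / ((\<tau> + \<theta>) * \<beta>)"
    unfolding a0_def Z_def blk3_diff qnorm2_MM P0_def \<omega>_def ..
  have By1: "B *v (ys - y 1) = P0 - dBy 1"
    unfolding P0_def dBy_def by (simp add: matrix_vector_mult_diff_distrib)
  have gamma1: "gs - \<gamma> 1 - (\<tau> * \<beta>) *\<^sub>R (P0 - dBy 1) = 1 *\<^sub>R \<omega> + ((\<tau> + \<theta>) * \<beta>) *\<^sub>R res 1"
    using gamma_diff_eq[OF le_refl] unfolding \<omega>_def by (simp add: algebra_simps)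
  have P0_dBy: "P0 - dBy 1 = 1 *\<^sub>R P0 + (-1) *\<^sub>R dBy 1" by simp
  have a1_ge: "a1 \<ge> qnorm2 H (ys - y 1) + \<beta> * (1 - \<tau>) * ((norm P0)\<^sup>2 - 2 * inner P0 (dBy 1) + pp 1)
      + ((norm \<omega>)\<^sup>2 + 2 * ((\<tau> + \<theta>) * \<beta>) * inner \<omega> (res 1) + ((\<tau> + \<theta>) * \<beta>)\<^sup>2 * rr 1) / ((\<tau> + \<theta>) * \<beta>)"
    unfolding a1_def Z_def blk3_diff qnorm2_MM By1 gamma1 unfolding P0_dBy norm_scaleR_add_sq pp_def rr_def
    using G.qnorm2_nonneg[of "xs - x 1"] by simp
  have Y1: "4 * (norm P0)\<^sup>2 - 4 * inner P0 (dBy 1) + pp 1 \<ge> 0"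
    using norm_scaleR_add_sq[of 2 P0 "-1" "dBy 1"] zero_le_power2[of "norm (2 *\<^sub>R P0 + (-1) *\<^sub>R dBy 1)"]
    unfolding pp_def by simp
  have Y2: "4 * (norm \<omega>)\<^sup>2 + 4 * ((\<tau> + \<theta>) * \<beta>) * inner \<omega> (res 1) + ((\<tau> + \<theta>) * \<beta>)\<^sup>2 * rr 1 \<ge> 0"
    using norm_scaleR_add_sq[of 2 \<omega> "(\<tau> + \<theta>) * \<beta>" "res 1"]
      zero_le_power2[of "norm (2 *\<^sub>R \<omega> + ((\<tau> + \<theta>) * \<beta>) *\<^sub>R res 1)"]
    unfolding rr_def by simp
  show "\<beta> * vartheta st \<tau> \<theta> * rp 1 \<le> 2 * a0" "hy 1 \<le> 2 * a0"
    using first_step_bounds_arith[OF beta_pos tau_theta_bounds(1) lyapunov a1_ge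
        step_sq_eq[OF le_refl] err_sq_eq[OF le_refl] a0_eq ex_le[OF le_refl] _ squares_nonneg(4) G.qnorm2_nonneg H.qnorm2_nonneg H.qnorm2_nonneg squares_nonneg(3)
        squares_nonneg(1) squares_nonneg(2) rp_sq_le _ Y1 Y2
        region_R_vartheta_pos(2,3)[OF st_range tau_theta]]
      region_R_vartheta_pos(1)[OF st_range tau_theta] tau_theta_bounds sh_range
    by auto
qed

lemma rel_error_first:
  assumes "lagrangian_sol xs ys gs"
  shows "err_sq 1 \<le> \<sigma> * step_sq 1 + (C2 - 1) * qnorm2 MM (blk3 xs ys gs - Z 0) - eta 1"
  using rel_error_first_arith[OF beta_pos tau_theta_bounds(1) tau_theta_bounds(3) region_R_vartheta_pos(1)[OF st_range tau_theta]
      ex_le[OF le_refl] sigma_range(1) squares_nonneg(4) squares_nonneg(3) squares_nonneg(2) sigma_nonneg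
      first_step_bounds[OF assms] phi_conds(1,2)]
  unfolding err_sq_eq[OF le_refl] step_sq_eq[OF le_refl] eta_def C2_def by simp

lemma hpe_instance:
  assumes sol: "lagrangian_sol xs ys gs"
  shows "hpe_iteration MM Z Zt (blk3 xs ys gs)
    (\<lambda>i. if i = 0 then (C2 - 1) * qnorm2 MM (blk3 xs ys gs - Z 0) else eta i) \<sigma>"
proof (intro hpe_iteration.intro hpe_iteration_axioms.intro)
  show "psd_matrix MM" by (rule M.psd_matrix_axioms)
  show "0 \<le> \<sigma>" "\<sigma> < 1" using sigma_nonneg sigma_range by auto
  show "0 \<le> (if i = 0 then (C2 - 1) * qnorm2 MM (blk3 xs ys gs - Z 0) else eta i)" for i
    using C2_ge_1 M.qnorm2_nonneg eta_nonneg by simp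
  show "0 \<le> inner (MM *v (Z (i - 1) - Z i)) (Zt i - blk3 xs ys gs)" if "i \<ge> 1" for i
    by (rule step_monotone_sol[OF sol that])
  show "qnorm2 MM (Zt i - Z i) \<le> \<sigma> * qnorm2 MM (Zt i - Z (i - 1))
      + (if i - 1 = 0 then (C2 - 1) * qnorm2 MM (blk3 xs ys gs - Z 0) else eta (i - 1))
      - (if i = 0 then (C2 - 1) * qnorm2 MM (blk3 xs ys gs - Z 0) else eta i)" if "i \<ge> 1" for i
    using rel_error_first[OF sol] rel_error_step[of i] that
    unfolding err_sq_def step_sq_def by (cases "i = 1") auto
qed

lemma avg_residual_eq:
  assumes "k \<ge> 1"
  shows "blk3 (avg k u) (avg k v) (avg k w) = (1 / real k) *\<^sub>R (MM *v (Z 0 - Z k))"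
proof -
  have "blk3 (avg k u) (avg k v) (avg k w) = avg k (\<lambda>i. MM *v (Z (i - 1) - Z i))"
    unfolding avg_blk3[symmetric] using MM_mult_step by (intro avg_cong) auto
  also have "\<dots> = (1 / real k) *\<^sub>R (MM *v (Z 0 - Z k))"
    unfolding avg_def using sum_pred_diff_telescope[of Z k] by (simp add: matrix_vector_mult_sum[symmetric])
  finally show ?thesis .
qed

lemma avg_w_eq: "k \<ge> 1 \<Longrightarrow> avg k w = A *v avg k xt + B *v avg k y - b"
proof -
  assume k: "k \<ge> 1"
  have "avg k w = avg k (\<lambda>i. A *v xt i + B *v y i - b)"
    using w_eq_res unfolding res_def by (intro avg_cong) auto
  thus ?thesis using k by (simp add: avg_add avg_diff avg_matrix_vector_mult avg_const)
qed

definition "eps_a k = (1 / real k) * (\<Sum>i = 1..k. inner (u i + transpose A *v \<gamma>t i) (xt i - avg k xt))"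
definition "zeta_a k = (1 / real k) * (\<Sum>i = 1..k. inner (v i + transpose B *v \<gamma>t i) (y i - avg k y))"

lemma eps_a_subdiff:
  assumes k: "k \<ge> 1"
  shows "eps_a k \<ge> 0" and "avg k u \<in> (\<lambda>s. s - transpose A *v avg k \<gamma>t) ` eps_subdiff f (eps_a k) (avg k xt)"
proof -
  have "avg k u = avg k (\<lambda>i. u i + transpose A *v \<gamma>t i) - transpose A *v avg k \<gamma>t"
    by (simp add: avg_add avg_matrix_vector_mult)
  thus "eps_a k \<ge> 0" "avg k u \<in> (\<lambda>s. s - transpose A *v avg k \<gamma>t) ` eps_subdiff f (eps_a k) (avg k xt)"
    using avg_subgradients_eps_subdiff[OF f_proper_convex k, of "\<lambda>i. u i + transpose A *v \<gamma>t i" xt] subgrad_f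
    unfolding eps_a_def by auto
qed

lemma zeta_a_subdiff:
  assumes k: "k \<ge> 1"
  shows "zeta_a k \<ge> 0" and "avg k v \<in> (\<lambda>s. s - transpose B *v avg k \<gamma>t) ` eps_subdiff g (zeta_a k) (avg k y)"
proof -
  have "avg k v = avg k (\<lambda>i. v i + transpose B *v \<gamma>t i) - transpose B *v avg k \<gamma>t"
    by (simp add: avg_add avg_matrix_vector_mult)
  thus "zeta_a k \<ge> 0" "avg k v \<in> (\<lambda>s. s - transpose B *v avg k \<gamma>t) ` eps_subdiff g (zeta_a k) (avg k y)"
    using avg_subgradients_eps_subdiff[OF g_proper_convex k, of "\<lambda>i. v i + transpose B *v \<gamma>t i" y]
      subgrad_g v_eq_gsub
    unfolding zeta_a_def by auto
qed

lemma residual_inner_split: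
  assumes i: "i \<ge> 1"
  shows "inner (u i + transpose A *v \<gamma>t i) (xt i - xa) + inner (v i + transpose B *v \<gamma>t i) (y i - ya)
    = inner (MM *v (Z (i - 1) - Z i)) (Zt i - blk3 xa ya ga)
      + (inner (w i) ga - inner (\<gamma>t i) (A *v xa + B *v ya - b))"
proof -
  have A: "inner (transpose A *v \<gamma>t i) (xt i - xa) = inner (\<gamma>t i) (A *v (xt i - xa))"
    and B: "inner (transpose B *v \<gamma>t i) (y i - ya) = inner (\<gamma>t i) (B *v (y i - ya))"
    using inner_matrix_vector_transpose[of "transpose A" "\<gamma>t i" "xt i - xa"]
      inner_matrix_vector_transpose[of "transpose B" "\<gamma>t i" "y i - ya"] by simp_all
  have "A *v (xt i - xa) + B *v (y i - ya) = w i - (A *v xa + B *v ya - b)"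
    using w_eq_res[OF i] unfolding res_def by (simp add: matrix_vector_mult_diff_distrib algebra_simps)
  hence "inner (\<gamma>t i) (A *v (xt i - xa)) + inner (\<gamma>t i) (B *v (y i - ya))
      = inner (\<gamma>t i) (w i) - inner (\<gamma>t i) (A *v xa + B *v ya - b)"
    by (metis inner_add_right inner_diff_right)
  thus ?thesis
    unfolding MM_mult_step[OF i] Zt_def blk3_diff inner_blk3 inner_add_left A B
    by (simp add: inner_diff_right inner_commute)
qed

text \<open>Summed over \<open>i\<close>, the terms \<open>\<langle>w i, avg k \<gamma>t\<rangle>\<close> and \<open>\<langle>\<gamma>t i, avg k w\<rangle>\<close> cancel.\<close>

lemma eps_a_add_zeta_a:
  assumes k: "k \<ge> 1"
  shows "eps_a k + zeta_a k
    = (1 / real k) * (\<Sum>i = 1..k. inner (MM *v (Z (i - 1) - Z i)) (Zt i - avg k Zt))"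
proof -
  define wa where "wa = A *v avg k xt + B *v avg k y - b"
  have Zt_avg: "avg k Zt = blk3 (avg k xt) (avg k y) (avg k \<gamma>t)"
    unfolding Zt_def[abs_def] by (rule avg_blk3)
  have cancel: "(\<Sum>i = 1..k. inner (w i) (avg k \<gamma>t) - inner (\<gamma>t i) wa) = 0"
  proof -
    have "(\<Sum>i = 1..k. inner (w i) (avg k \<gamma>t)) = real k * inner wa (avg k \<gamma>t)"
      unfolding inner_sum_left[symmetric] sum_eq_avg[OF k] wa_def avg_w_eq[OF k] by simp
    moreover have "(\<Sum>i = 1..k. inner (\<gamma>t i) wa) = real k * inner wa (avg k \<gamma>t)"
      unfolding inner_sum_left[symmetric] sum_eq_avg[OF k] by (simp add: inner_commute)
    ultimately show ?thesis by (simp add: sum_subtractf)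
  qed
  have "eps_a k + zeta_a k = (1 / real k) * (\<Sum>i = 1..k.
      inner (u i + transpose A *v \<gamma>t i) (xt i - avg k xt) + inner (v i + transpose B *v \<gamma>t i) (y i - avg k y))"
    unfolding eps_a_def zeta_a_def by (simp add: sum.distrib distrib_left)
  also have "\<dots> = (1 / real k) * (\<Sum>i = 1..k. inner (MM *v (Z (i - 1) - Z i)) (Zt i - avg k Zt)
      + (inner (w i) (avg k \<gamma>t) - inner (\<gamma>t i) wa))"
    unfolding Zt_avg wa_def using residual_inner_split by (intro arg_cong[where f = "\<lambda>t. _ * t"] sum.cong) auto
  also have "\<dots> = (1 / real k) * (\<Sum>i = 1..k. inner (MM *v (Z (i - 1) - Z i)) (Zt i - avg k Zt))"
    using cancel by (simp add: sum.distrib)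
  finally show ?thesis .
qed

lemma solution_bounds:
  assumes sol: "lagrangian_sol xs ys gs" and k: "k \<ge> 1"
  defines "a0 \<equiv> qnorm2 MM (blk3 xs ys gs - Z 0)"
  shows "norm (blk3 (avg k u) (avg k v) (avg k w)) \<le> 2 * sqrt (lambda_max MM * a0 * C2) / real k"
    and "eps_a k + zeta_a k \<le> 3 * a0 * C3 / (2 * real k)"
proof -
  interpret hpe: hpe_iteration MM Z Zt "blk3 xs ys gs"
    "\<lambda>i. if i = 0 then (C2 - 1) * a0 else eta i" \<sigma>
    unfolding a0_def by (rule hpe_instance[OF sol])
  have D0: "qnorm2 MM (blk3 xs ys gs - Z 0) + (if (0::nat) = 0 then (C2 - 1) * a0 else eta 0) = a0 * C2"
    unfolding a0_def by (simp add: algebra_simps)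
  have "norm (MM *v (Z 0 - Z k)) \<le> 2 * sqrt (lambda_max MM * (a0 * C2))"
    using hpe.residual_norm_le[of k] unfolding D0 .
  thus "norm (blk3 (avg k u) (avg k v) (avg k w)) \<le> 2 * sqrt (lambda_max MM * a0 * C2) / real k"
    unfolding avg_residual_eq[OF k] using k by (simp add: divide_right_mono mult.assoc)
  have "eps_a k + zeta_a k \<le> (1 / real k) * (3 * (3 - 2 * \<sigma>) * (a0 * C2) / (2 * (1 - \<sigma>)))"
    unfolding eps_a_add_zeta_a[OF k] using hpe.ergodic_gap_le[OF k] unfolding D0
    by (intro mult_left_mono) auto
  also have "\<dots> = 3 * a0 * C3 / (2 * real k)"
    unfolding C3_def using sigma_range by (simp add: field_simps)
  finally show "eps_a k + zeta_a k \<le> 3 * a0 * C3 / (2 * real k)" .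
qed

definition "sol_dists = {qnorm2 MM (blk3 xs ys gs - Z 0) | xs ys gs. lagrangian_sol xs ys gs}"

lemma sol_dists_nonneg: "a \<in> sol_dists \<Longrightarrow> a \<ge> 0"
  unfolding sol_dists_def using M.qnorm2_nonneg by auto

lemma ergodic_residual_le:
  assumes ne: "sol_dists \<noteq> {}" and k: "k \<ge> 1"
  shows "max (norm (avg k u)) (max (norm (avg k v)) (norm (avg k w)))
    \<le> 2 * sqrt (lambda_max MM * Inf sol_dists * C2) / real k"
proof -
  define X where "X = max (norm (avg k u)) (max (norm (avg k v)) (norm (avg k w)))"
  have X: "0 \<le> X" "X \<le> norm (blk3 (avg k u) (avg k v) (avg k w))"
    unfolding X_def using norm_le_norm_blk3 by (auto simp: le_max_iff_disj)
  have kpos: "real k > 0" using k by simp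
  have c: "lambda_max MM * C2 \<ge> 0" using M.lambda_max_nonneg C2_ge_1 by simp
  have "(real k * X / 2)\<^sup>2 \<le> (lambda_max MM * C2) * Inf sol_dists"
  proof (rule le_mult_Inf[OF ne c])
    fix a assume a: "a \<in> sol_dists"
    then obtain xs ys gs where "lagrangian_sol xs ys gs" "a = qnorm2 MM (blk3 xs ys gs - Z 0)"
      unfolding sol_dists_def by blast
    hence "X \<le> 2 * sqrt (lambda_max MM * a * C2) / real k"
      using solution_bounds(1)[of xs ys gs k] X(2) k by simp
    hence "real k * X / 2 \<le> sqrt (lambda_max MM * a * C2)"
      using kpos by (simp add: field_simps)
    hence "(real k * X / 2)\<^sup>2 \<le> (sqrt (lambda_max MM * a * C2))\<^sup>2"
      using X(1) kpos by (intro power_mono) auto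
    also have "\<dots> = (lambda_max MM * C2) * a"
      using c sol_dists_nonneg[OF a] by (simp add: mult_ac)
    finally show "(real k * X / 2)\<^sup>2 \<le> (lambda_max MM * C2) * a" .
  qed
  hence "real k * X / 2 \<le> sqrt ((lambda_max MM * C2) * Inf sol_dists)"
    by (rule real_le_rsqrt)
  thus ?thesis unfolding X_def[symmetric] using kpos by (simp add: field_simps mult_ac)
qed

lemma ergodic_eps_le:
  assumes ne: "sol_dists \<noteq> {}" and k: "k \<ge> 1"
  shows "max (eps_a k) (zeta_a k) \<le> 3 * Inf sol_dists * C3 / (2 * real k)"
proof -
  have C3: "C3 \<ge> 0" unfolding C3_def using C2_ge_1 sigma_range by simp
  have "eps_a k + zeta_a k \<le> (3 * C3 / (2 * real k)) * Inf sol_dists"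
  proof (rule le_mult_Inf[OF ne])
    show "3 * C3 / (2 * real k) \<ge> 0" using C3 by simp
    fix a assume "a \<in> sol_dists"
    then obtain xs ys gs where "lagrangian_sol xs ys gs" "a = qnorm2 MM (blk3 xs ys gs - Z 0)"
      unfolding sol_dists_def by blast
    thus "eps_a k + zeta_a k \<le> 3 * C3 / (2 * real k) * a"
      using solution_bounds(2)[of xs ys gs k] k by (simp add: mult_ac)
  qed
  thus ?thesis using eps_a_subdiff(1)[OF k] zeta_a_subdiff(1)[OF k] by (simp add: mult_ac)
qed

end

theorem theorem2p11:
  fixes f :: "real^'n \<Rightarrow> ereal" and g :: "real^'p \<Rightarrow> ereal"
    and A :: "real^'n^'m" and B :: "real^'p^'m" and b :: "real^'m"
    and G :: "real^'n^'n" and H :: "real^'p^'p"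
    and \<beta> st sh \<tau> \<theta> \<sigma> :: real
    and x :: "nat \<Rightarrow> real^'n" and y :: "nat \<Rightarrow> real^'p" and \<gamma> :: "nat \<Rightarrow> real^'m"
    and xt :: "nat \<Rightarrow> real^'n" and u :: "nat \<Rightarrow> real^'n"
    and \<gamma>t :: "nat \<Rightarrow> real^'m" and \<gamma>h :: "nat \<Rightarrow> real^'m"
    and v :: "nat \<Rightarrow> real^'p" and w :: "nat \<Rightarrow> real^'m"
    and M :: "real^('n + 'p + 'm)^('n + 'p + 'm)"
    and d0 :: real and k :: nat
  assumes f_pcc: "proper_closed_convex f" and g_pcc: "proper_closed_convex g"
    and sol_exists: "\<exists>xs ys gs. 0 \<in> (\<lambda>s. s - transpose A *v gs) ` subdiff f xs
                        \<and> 0 \<in> (\<lambda>s. s - transpose B *v gs) ` subdiff g ys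
                        \<and> A *v xs + B *v ys - b = 0"
    and beta_pos: "\<beta> > 0"
    and st_range: "0 \<le> st" "st < 1" and sh_range: "0 \<le> sh" "sh < 1"
    and G_pd: "sym_pd G" and H_psd: "sym_psd H"
    and tau_theta: "(\<tau>, \<theta>) \<in> region_R st"
    \<comment> \<open>the algorithm, for every iteration k \<ge> 1\<close>
    and gt_def: "\<And>i. i \<ge> 1 \<Longrightarrow> \<gamma>t i = \<gamma> (i - 1) - \<beta> *\<^sub>R (A *v xt i + B *v y (i - 1) - b)"
    and u_incl: "\<And>i. i \<ge> 1 \<Longrightarrow> u i \<in> (\<lambda>s. s - transpose A *v \<gamma>t i) ` subdiff f (xt i)"
    and inexact: "\<And>i. i \<ge> 1 \<Longrightarrow>
        qnorm2 G (xt i - x (i - 1) + matrix_inv G *v u i)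
          \<le> st / \<beta> * (norm (\<gamma>t i - \<gamma> (i - 1)))^2 + sh * qnorm2 G (xt i - x (i - 1))"
    and gh_def: "\<And>i. i \<ge> 1 \<Longrightarrow> \<gamma>h i = \<gamma> (i - 1) - (\<tau> * \<beta>) *\<^sub>R (A *v xt i + B *v y (i - 1) - b)"
    and y_opt: "\<And>i y'. i \<ge> 1 \<Longrightarrow>
        g (y i) - ereal (inner (\<gamma>h i) (B *v y i))
          + ereal (\<beta> / 2 * (norm (A *v xt i + B *v y i - b))^2 + 1 / 2 * qnorm2 H (y i - y (i - 1)))
        \<le> g y' - ereal (inner (\<gamma>h i) (B *v y'))
          + ereal (\<beta> / 2 * (norm (A *v xt i + B *v y' - b))^2 + 1 / 2 * qnorm2 H (y' - y (i - 1)))"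
    and x_upd: "\<And>i. i \<ge> 1 \<Longrightarrow> x i = x (i - 1) - matrix_inv G *v u i"
    and g_upd: "\<And>i. i \<ge> 1 \<Longrightarrow> \<gamma> i = \<gamma>h i - (\<theta> * \<beta>) *\<^sub>R (A *v xt i + B *v y i - b)"
    \<comment> \<open>residual quantities v_i, w_i\<close>
    and v_def: "\<And>i. v i = (H + (((\<tau> - \<tau> * \<theta> + \<theta>) * \<beta>) / (\<tau> + \<theta>)) *\<^sub>R (transpose B ** B)) *v (y (i - 1) - y i)
                       - (\<tau> / (\<tau> + \<theta>)) *\<^sub>R (transpose B *v (\<gamma> (i - 1) - \<gamma> i))"
    and w_def: "\<And>i. w i = - ((\<tau> / (\<tau> + \<theta>)) *\<^sub>R (B *v (y (i - 1) - y i)))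
                       + (1 / ((\<tau> + \<theta>) * \<beta>)) *\<^sub>R (\<gamma> (i - 1) - \<gamma> i)"
    and M_def: "M = Mmat G H B \<beta> \<tau> \<theta>"
    and d0_def: "d0 = Inf {qnorm2 M (blk3 xs ys gs - blk3 (x 0) (y 0) (\<gamma> 0)) | xs ys gs.
                     0 \<in> (\<lambda>s. s - transpose A *v gs) ` subdiff f xs
                   \<and> 0 \<in> (\<lambda>s. s - transpose B *v gs) ` subdiff g ys
                   \<and> A *v xs + B *v ys - b = 0}"
    and sigma_range: "sh \<le> \<sigma>" "\<sigma> < 1"
    and phi_conds: "phi st \<tau> \<theta> \<sigma> \<ge> 0" "phi_hat st \<tau> \<theta> \<sigma> \<ge> 0"
                   "phi_tilde st \<tau> \<theta> \<sigma> > 0" "phi_bar st \<tau> \<theta> \<sigma> \<ge> 0"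
    and k_pos: "k \<ge> 1"
  shows "let xta = avg k xt; ya = avg k y; gta = avg k \<gamma>t;
             ua = avg k u; va = avg k v; wa = avg k w;
             \<epsilon>a = (1 / real k) * (\<Sum>i = 1..k. inner (u i + transpose A *v \<gamma>t i) (xt i - xta));
             \<zeta>a = (1 / real k) * (\<Sum>i = 1..k. inner (v i + transpose B *v \<gamma>t i) (y i - ya));
             vth = vartheta st \<tau> \<theta>;
             C2 = 1 + 4 * (1 + \<tau> + vth) * phi st \<tau> \<theta> \<sigma> / ((\<tau> + \<theta>) * (1 + \<tau>) * vth);
             C3 = (3 - 2 * \<sigma>) * C2 / (1 - \<sigma>)
         in \<epsilon>a \<ge> 0 \<and> \<zeta>a \<ge> 0
          \<and> ua \<in> (\<lambda>s. s - transpose A *v gta) ` eps_subdiff f \<epsilon>a xta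
          \<and> va \<in> (\<lambda>s. s - transpose B *v gta) ` eps_subdiff g \<zeta>a ya
          \<and> wa = A *v xta + B *v ya - b
          \<and> max (norm ua) (max (norm va) (norm wa)) \<le> 2 * sqrt (lambda_max M * d0 * C2) / real k
          \<and> max \<epsilon>a \<zeta>a \<le> 3 * d0 * C3 / (2 * real k)"
proof -
  interpret admm f g A B b G H \<beta> st sh \<tau> \<theta> \<sigma> x y \<gamma> xt u \<gamma>t \<gamma>h v w
    using assms by unfold_locales auto
  have d0: "d0 = Inf sol_dists"
    by (simp only: d0_def M_def sol_dists_def lagrangian_sol_def Z_def)
  have "sol_dists \<noteq> {}"
    using sol_exists unfolding sol_dists_def lagrangian_sol_def by blast
  thus ?thesis
    unfolding Let_def M_def d0
    using eps_a_subdiff[OF k_pos] zeta_a_subdiff[OF k_pos] avg_w_eq[OF k_pos]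
      ergodic_residual_le[OF _ k_pos] ergodic_eps_le[OF _ k_pos]
    unfolding eps_a_def zeta_a_def C3_def C2_def by simp
qed

end
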